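(* Let $\hat h\in\operatorname{argmin}_{h\in\mathcal{H}_{2k+1}}\widehat{\mathbb{E}}_S[h]$ and $\bar h\in\operatorname{argmin}_{h\in\mathcal{H}_{2k+1}}\mathbb{E}_\mathcal{D}[h]$, assuming both minimizers exist. Fix $\delta,\epsilon\in(0,1)$. If $$n\ge \frac{3(k+1)(\log(pq)+8)+3\log\big(8k\,(k!)\big)+6\log(2/\delta)}{2\epsilon^2},$$ then with probability at least $1-\delta$ over the choice of $S$, $\mathbb{E}_\mathcal{D}[\hat h]-\mathbb{E}_\mathcal{D}[\bar h]\le\epsilon$.
   Context: Fix integers $p,q\ge1$, $k\ge1$, and basis functions $\phi_1,\dots,\phi_q:\mathbb{R}\to[-1,1]$. A labeled binary tree is a rooted, ordered, full binary tree (every internal node has exactly two children) such that: - each internal node is labeled "+" or "*"; - each leaf is labeled by a pair $(i,j)\in\{1,\dots,q\}\times\{1,\dots,p\}$, standing for $\phi_i(x_j)$. $\mathcal{F}_{2k+1}$ is the set of such trees with at most $2k+1$ nodes. For a tree $f$ and real leaf weights $\bm{w}$, the function $h(\bm{x};f,\bm{w})$ is defined recursively: a leaf gives $w\,\phi_i(x_j)$; "+" adds the values of its children; "*" multiplies them. Set $\mathcal{W}(f)=\{\bm{x}\mapsto h(\bm{x};f,\bm{w}):\|\bm{w}\|_1\le1\}$. Let $\mathcal{Y}\subseteq\mathbb{R}$ and let $d:\mathcal{Y}\times\mathbb{R}\to[0,1]$ be a loss with $d(y,\cdot)$ 1-Lipschitz for each $y$. Define $\mathcal{H}(f)=\{(\bm{x},y)\mapsto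 d(y,g(\bm{x})):g\in\mathcal{W}(f)\}$ and $\mathcal{H}_{2k+1}=\bigcup_{f\in\mathcal{F}_{2k+1}}\mathcal{H}(f)$. $\mathcal{D}$ is a distribution on $\mathbb{R}^p\times\mathcal{Y}$, and $S=\{z_1,\dots,z_n\}$ consists of $n$ i.i.d. samples from $\mathcal{D}$. The risks are $\mathbb{E}_\mathcal{D}[h]=\mathbb{E}_{z\sim\mathcal{D}}[h(z)]$ and $\widehat{\mathbb{E}}_S[h]=\frac1n\sum_{i=1}^n h(z_i)$. *)

theory Defs
  imports "HOL-Probability.Probability"
begin

text \<open>Labeled binary trees. A leaf \<open>Leaf i j\<close> stands for phi_i(x_j); the feature
  index j ranges over the finite index type 'p (so p = CARD('p)), the basis index i
  must lie in {1..q}.\<close>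
datatype 'p ltree = Leaf nat 'p | Plus "'p ltree" "'p ltree" | Times "'p ltree" "'p ltree"

fun nodes :: "'p ltree \<Rightarrow> nat" where
  "nodes (Leaf i j) = 1"
| "nodes (Plus l r) = 1 + nodes l + nodes r"
| "nodes (Times l r) = 1 + nodes l + nodes r"

fun leaves :: "'p ltree \<Rightarrow> nat" where
  "leaves (Leaf i j) = 1"
| "leaves (Plus l r) = leaves l + leaves r"
| "leaves (Times l r) = leaves l + leaves r"

fun valid_tree :: "nat \<Rightarrow> 'p ltree \<Rightarrow> bool" where
  "valid_tree q (Leaf i j) = (1 \<le> i \<and> i \<le> q)"
| "valid_tree q (Plus l r) = (valid_tree q l \<and> valid_tree q r)"
| "valid_tree q (Times l r) = (valid_tree q l \<and> valid_tree q r)"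

text \<open>Evaluation h(x; f, w); the leaf weights are given as a list in left-to-right
  leaf order (length = number of leaves).\<close>
fun heval :: "(nat \<Rightarrow> real \<Rightarrow> real) \<Rightarrow> ('p::finite) ltree \<Rightarrow> real list \<Rightarrow> real ^ 'p \<Rightarrow> real" where
  "heval \<phi> (Leaf i j) w x = hd w * \<phi> i (x $ j)"
| "heval \<phi> (Plus l r) w x =
     heval \<phi> l (take (leaves l) w) x + heval \<phi> r (drop (leaves l) w) x"
| "heval \<phi> (Times l r) w x =
     heval \<phi> l (take (leaves l) w) x * heval \<phi> r (drop (leaves l) w) x"

definition trees :: "nat \<Rightarrow> nat \<Rightarrow> 'p ltree set" where
  "trees q m = {f. valid_tree q f \<and> nodes f \<le> m}"

definition Wclass :: "(nat \<Rightarrow> real \<Rightarrow> real) \<Rightarrow> ('p::finite) ltree \<Rightarrow> (real ^ 'p \<Rightarrow> real) set" where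
  "Wclass \<phi> f = {heval \<phi> f w | w. length w = leaves f \<and> sum_list (map abs w) \<le> 1}"

definition Hclass :: "(real \<Rightarrow> real \<Rightarrow> real) \<Rightarrow> (nat \<Rightarrow> real \<Rightarrow> real) \<Rightarrow> ('p::finite) ltree
    \<Rightarrow> ((real ^ 'p) \<times> real \<Rightarrow> real) set" where
  "Hclass d \<phi> f = {(\<lambda>(x, y). d y (g x)) | g. g \<in> Wclass \<phi> f}"

definition Hm :: "(real \<Rightarrow> real \<Rightarrow> real) \<Rightarrow> (nat \<Rightarrow> real \<Rightarrow> real) \<Rightarrow> nat \<Rightarrow> nat
    \<Rightarrow> ((real ^ ('p::finite)) \<times> real \<Rightarrow> real) set" where
  "Hm d \<phi> q m = (\<Union>f \<in> trees q m. Hclass d \<phi> f)"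

definition emp_risk :: "nat \<Rightarrow> (nat \<Rightarrow> 'z) \<Rightarrow> ('z \<Rightarrow> real) \<Rightarrow> real" where
  "emp_risk n S h = (\<Sum>i<n. h (S i)) / real n"

end

theory Submission
  imports Defs
begin

text \<open>Hoeffding's inequality controls the empirical risk of one bounded loss. To make the
  control uniform over the \<open>l\<^sub>1\<close> unit ball of leaf weights without losing a factor
  \<open>log (1/\<epsilon>)\<close>, we chain: the weights \<open>w\<close> of the empirical minimiser are rounded towards zero
  to grids of mesh \<open>1 / (24 (k + 1) 2\<^sup>j)\<close>, giving points \<open>v\<^sub>0, \<dots>, v\<^sub>J\<close> with
  \<open>\<parallel>w - v\<^sub>j\<parallel>\<^sub>1 \<le> 2\<^bsup>-j\<^esup>/24\<close>. A tree is 1-Lipschitz in its weights on that ball, so the loss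
  increment between consecutive points has range \<open>2\<^bsup>-j\<^esup>/4\<close> and needs a Hoeffding deviation of order
  \<open>2\<^bsup>-j\<^esup>\<close> times the square root of the logarithm of the number of such links. Counting
  lattice points in the \<open>l\<^sub>1\<close> ball (at most \<open>e\<^bsup>L(6+j)\<^esup>\<close> at level \<open>j\<close>) and trees (at most
  \<open>(k+1) 2\<^sup>k k! (pq)\<^bsup>k+1\<^esup>\<close>), a union bound over trees and levels, plus one Hoeffding bound for
  the comparator \<open>hbar\<close>, shows that the excess risk exceeds \<open>\<epsilon>\<close> with probability at most \<open>\<delta>\<close>.\<close>

section \<open>Hoeffding bounds for empirical risks\<close>

lemma indep_vars_PiM_coordinates:
  assumes M: "prob_space M" and I: "I \<noteq> {}"
  shows "prob_space.indep_vars (PiM I (\<lambda>_. M)) (\<lambda>_. M) (\<lambda>i x. x i) I"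
proof -
  interpret product_prob_space "\<lambda>_. M" I
    by (intro product_prob_spaceI M)
  have "distr (PiM I (\<lambda>_. M)) (PiM I (\<lambda>_. M)) (\<lambda>x. restrict x I) = PiM I (\<lambda>_. M)"
    by (subst distr_cong[where g = "\<lambda>x. x"]) (auto simp: space_PiM PiE_def extensional_restrict)
  also have "\<dots> = PiM I (\<lambda>i. distr (PiM I (\<lambda>_. M)) M (\<lambda>x. x i))"
    by (intro PiM_cong refl) (rule distr_PiM_component[symmetric], auto simp: M)
  finally show ?thesis
    by (subst P.indep_vars_iff_distr_eq_PiM'[OF I]) auto
qed

definition emp_risk_lower_tail :: "nat \<Rightarrow> 'a measure \<Rightarrow> ('a \<Rightarrow> real) \<Rightarrow> real \<Rightarrow> (nat \<Rightarrow> 'a) set" where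
  "emp_risk_lower_tail n M g s =
     {S \<in> space (PiM {..<n} (\<lambda>_. M)). emp_risk n S g \<le> integral\<^sup>L M g - s}"

lemma emp_risk_measurable:
  assumes [measurable]: "g \<in> borel_measurable M"
  shows "(\<lambda>S. emp_risk n S g) \<in> borel_measurable (PiM {..<n} (\<lambda>_. M))"
  unfolding emp_risk_def by measurable

lemma emp_risk_lower_tail_sets:
  assumes "g \<in> borel_measurable M"
  shows "emp_risk_lower_tail n M g s \<in> sets (PiM {..<n} (\<lambda>_. M))"
proof -
  note emp_risk_measurable[OF assms, measurable]
  show ?thesis unfolding emp_risk_lower_tail_def by measurable
qed

lemma hoeffding_emp_risk:
  fixes g :: "'a \<Rightarrow> real"
  assumes M: "prob_space M" and n: "n > 0" and g: "g \<in> borel_measurable M"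
    and ab: "AE z in M. g z \<in> {a..b}" "a < b" and s: "s \<ge> 0"
  shows "measure (PiM {..<n} (\<lambda>_. M)) (emp_risk_lower_tail n M g s) \<le> exp (-2 * n * s\<^sup>2 / (b - a)\<^sup>2)"
proof -
  let ?P = "PiM {..<n} (\<lambda>_. M)"
  interpret product_prob_space "\<lambda>_. M" "{..<n}"
    by (intro product_prob_spaceI M)
  have ne: "{..<n} \<noteq> {}"
    using n by auto
  have coord: "(\<lambda>S. S i) \<in> ?P \<rightarrow>\<^sub>M M" if "i < n" for i
    using measurable_component_singleton[of i "{..<n}" "\<lambda>_. M"] that by simp
  have component: "distr ?P M (\<lambda>S. S i) = M" if "i < n" for i
    using distr_PiM_component[of "{..<n}" "\<lambda>_. M" i] M that by simp
  have distr_coord: "distr ?P borel (\<lambda>S. g (S i)) = distr M borel g" if "i < n" for i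
    using distr_distr[OF g coord[OF that]] component[OF that] by (simp add: comp_def)
  interpret H: Hoeffding_ineq_iid ?P "{..<n}" "\<lambda>i S. g (S i)" "\<lambda>S. g (S 0)" a b "P.expectation (\<lambda>S. g (S 0))"
  proof unfold_locales
    show "P.indep_vars (\<lambda>_. borel) (\<lambda>i S. g (S i)) {..<n}"
      using P.indep_vars_compose2[where Y = "\<lambda>_. g" and N = "\<lambda>_. borel",
          OF indep_vars_PiM_coordinates[OF M ne]] g
      by blast
    show "AE S in ?P. g (S 0) \<in> {a..b}"
      by (rule AE_PiM_component[where P = "\<lambda>z. g z \<in> {a..b}"]) (use M n ab in simp_all)
    show "distr ?P borel (\<lambda>S. g (S i)) = distr ?P borel (\<lambda>S. g (S 0))" if "i \<in> {..<n}" for i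
      using distr_coord n that by simp
    show "random_variable borel (\<lambda>S. g (S 0))"
      using measurable_compose[OF coord g] n by simp
  qed simp_all
  have "P.expectation (\<lambda>S. g (S 0)) = integral\<^sup>L (distr ?P M (\<lambda>S. S 0)) g"
    by (rule integral_distr[OF coord g, symmetric]) (rule n)
  also have "\<dots> = integral\<^sup>L M g"
    by (simp only: component[OF n])
  finally have "emp_risk_lower_tail n M g s
      = {S \<in> space ?P. (\<Sum>i\<in>{..<n}. g (S i)) / real (card {..<n}) \<le> P.expectation (\<lambda>S. g (S 0)) - s}"
    unfolding emp_risk_lower_tail_def emp_risk_def by simp
  then show ?thesis
    using H.Hoeffding_ineq_le'[OF s ab(2) ne] by simp
qed

lemma hoeffding_emp_risk_union:
  fixes g :: "'i \<Rightarrow> 'a \<Rightarrow> real"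
  assumes M: "prob_space M" and n: "n > 0" and I: "finite I"
    and g: "\<And>i. i \<in> I \<Longrightarrow> g i \<in> borel_measurable M"
    and range: "\<And>i. i \<in> I \<Longrightarrow> AE z in M. g i z \<in> {a i..a i + c}"
    and c: "c > 0" and B: "B \<ge> 0"
  shows "(\<Union>i\<in>I. emp_risk_lower_tail n M (g i) (c * sqrt (B / (2 * real n)))) \<in> sets (PiM {..<n} (\<lambda>_. M))"
    and "measure (PiM {..<n} (\<lambda>_. M)) (\<Union>i\<in>I. emp_risk_lower_tail n M (g i) (c * sqrt (B / (2 * real n))))
           \<le> card I * exp (- B)"
proof -
  let ?P = "PiM {..<n} (\<lambda>_. M)" and ?s = "c * sqrt (B / (2 * real n))"
  interpret P: prob_space ?P by (rule prob_space_PiM) (rule M)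
  have sets: "emp_risk_lower_tail n M (g i) ?s \<in> sets ?P" if "i \<in> I" for i
    using emp_risk_lower_tail_sets[OF g[OF that]] .
  then show "(\<Union>i\<in>I. emp_risk_lower_tail n M (g i) ?s) \<in> sets ?P"
    using I by blast
  have exponent: "-2 * real n * ?s\<^sup>2 / (a i + c - a i)\<^sup>2 = - B" for i
    using n c B by (simp add: power_mult_distrib)
  have tail: "measure ?P (emp_risk_lower_tail n M (g i) ?s) \<le> exp (- B)" if "i \<in> I" for i
    using hoeffding_emp_risk[OF M n g[OF that] range[OF that], of ?s] c B
    unfolding exponent by simp
  have "measure ?P (\<Union>i\<in>I. emp_risk_lower_tail n M (g i) ?s) \<le> (\<Sum>i\<in>I. measure ?P (emp_risk_lower_tail n M (g i) ?s))"
    by (rule P.finite_measure_subadditive_finite[OF I]) (use sets in auto)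
  also have "\<dots> \<le> (\<Sum>i\<in>I. exp (- B))"
    by (intro sum_mono tail)
  finally show "measure ?P (\<Union>i\<in>I. emp_risk_lower_tail n M (g i) ?s) \<le> card I * exp (- B)"
    by simp
qed

section \<open>Trees are 1-Lipschitz in their weights\<close>

definition l1_norm :: "real list \<Rightarrow> real" where
  "l1_norm w = sum_list (map abs w)"

definition l1_dist :: "real list \<Rightarrow> real list \<Rightarrow> real" where
  "l1_dist w v = sum_list (map (\<lambda>(a, b). \<bar>a - b\<bar>) (zip w v))"

lemma l1_norm_nonneg: "l1_norm w \<ge> 0"
  unfolding l1_norm_def by (induction w) auto

lemma l1_norm_take_drop: "l1_norm w = l1_norm (take k w) + l1_norm (drop k w)"
  unfolding l1_norm_def by (metis append_take_drop_id map_append sum_list_append)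

lemma l1_norm_take_drop_le:
  "l1_norm w \<le> 1 \<Longrightarrow> l1_norm (take k w) \<le> 1 \<and> l1_norm (drop k w) \<le> 1"
  using l1_norm_take_drop[of w k] l1_norm_nonneg[of "take k w"] l1_norm_nonneg[of "drop k w"]
  by linarith

lemma l1_dist_take_drop: "l1_dist w v = l1_dist (take k w) (take k v) + l1_dist (drop k w) (drop k v)"
  unfolding l1_dist_def by (metis append_take_drop_id map_append sum_list_append take_zip drop_zip)

lemma l1_dist_commute: "l1_dist w v = l1_dist v w"
  unfolding l1_dist_def
  by (induction w arbitrary: v) (auto simp: zip_Cons1 abs_minus_commute split: list.splits)

lemma l1_dist_triangle:
  "length u = length v \<Longrightarrow> length v = length w \<Longrightarrow> l1_dist u w \<le> l1_dist u v + l1_dist v w"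
  by (induction u v w rule: list_induct3) (auto simp: l1_dist_def)

lemma leaves_pos: "leaves f \<ge> 1"
  by (induction f) auto

lemma nodes_eq_leaves: "nodes f + 1 = 2 * leaves f"
  by (induction f) auto

context
  fixes q :: nat and \<phi> :: "nat \<Rightarrow> real \<Rightarrow> real"
  assumes phi_bound: "\<And>i t. i \<in> {1..q} \<Longrightarrow> \<bar>\<phi> i t\<bar> \<le> 1"
begin

lemma abs_heval_le:
  "valid_tree q f \<Longrightarrow> length w = leaves f \<Longrightarrow> l1_norm w \<le> 1 \<Longrightarrow> \<bar>heval \<phi> f w x\<bar> \<le> l1_norm w"
proof (induction f arbitrary: w)
  case (Leaf i j)
  then obtain c where "w = [c]" by (cases w) auto
  moreover have "\<bar>c * \<phi> i (x $ j)\<bar> \<le> \<bar>c\<bar>"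
    using phi_bound[of i "x $ j"] Leaf.prems by (simp add: abs_mult mult_left_le)
  ultimately show ?case by (simp add: l1_norm_def)
next
  case (Plus l r)
  let ?a = "take (leaves l) w" and ?b = "drop (leaves l) w"
  have "\<bar>heval \<phi> l ?a x\<bar> \<le> l1_norm ?a" "\<bar>heval \<phi> r ?b x\<bar> \<le> l1_norm ?b"
    using Plus l1_norm_take_drop_le[of w "leaves l"] by fastforce+
  then show ?case
    using l1_norm_take_drop[of w "leaves l"] by simp
next
  case (Times l r)
  let ?a = "take (leaves l) w" and ?b = "drop (leaves l) w"
  have "\<bar>heval \<phi> l ?a x\<bar> \<le> l1_norm ?a" "\<bar>heval \<phi> r ?b x\<bar> \<le> l1_norm ?b" "l1_norm ?b \<le> 1"
    using Times l1_norm_take_drop_le[of w "leaves l"] by fastforce+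
  then have "\<bar>heval \<phi> l ?a x * heval \<phi> r ?b x\<bar> \<le> l1_norm ?a * 1"
    unfolding abs_mult by (intro mult_mono) auto
  then show ?case
    using l1_norm_take_drop[of w "leaves l"] l1_norm_nonneg[of ?b] by simp
qed

text \<open>Inside the unit \<open>l\<^sub>1\<close>-ball every subtree evaluates to a value of absolute value at most 1,
  so the product rule keeps the Lipschitz constant equal to 1.\<close>

lemma abs_heval_diff_le:
  "valid_tree q f \<Longrightarrow> length w = leaves f \<Longrightarrow> length v = leaves f \<Longrightarrow> l1_norm w \<le> 1 \<Longrightarrow> l1_norm v \<le> 1 \<Longrightarrow>
     \<bar>heval \<phi> f w x - heval \<phi> f v x\<bar> \<le> l1_dist w v"
proof (induction f arbitrary: w v)
  case (Leaf i j)
  then obtain c e where "w = [c]" "v = [e]" by (cases w; cases v) auto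
  moreover have "\<bar>(c - e) * \<phi> i (x $ j)\<bar> \<le> \<bar>c - e\<bar>"
    using phi_bound[of i "x $ j"] Leaf.prems by (simp add: abs_mult mult_left_le)
  ultimately show ?case by (simp add: l1_dist_def left_diff_distrib)
next
  case (Plus l r)
  let ?a = "take (leaves l) w" and ?b = "drop (leaves l) w"
  let ?c = "take (leaves l) v" and ?d = "drop (leaves l) v"
  have "\<bar>heval \<phi> l ?a x - heval \<phi> l ?c x\<bar> \<le> l1_dist ?a ?c"
    "\<bar>heval \<phi> r ?b x - heval \<phi> r ?d x\<bar> \<le> l1_dist ?b ?d"
    using Plus l1_norm_take_drop_le[of w "leaves l"] l1_norm_take_drop_le[of v "leaves l"]
    by fastforce+
  then show ?case
    using l1_dist_take_drop[of w v "leaves l"] by simp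
next
  case (Times l r)
  let ?a = "take (leaves l) w" and ?b = "drop (leaves l) w"
  let ?c = "take (leaves l) v" and ?d = "drop (leaves l) v"
  have norms: "l1_norm ?a \<le> 1" "l1_norm ?b \<le> 1" "l1_norm ?c \<le> 1" "l1_norm ?d \<le> 1"
    using Times.prems l1_norm_take_drop_le[of w "leaves l"] l1_norm_take_drop_le[of v "leaves l"]
    by auto
  define A B C E where "A = heval \<phi> l ?a x" and "B = heval \<phi> r ?b x"
    and "C = heval \<phi> l ?c x" and "E = heval \<phi> r ?d x"
  have "\<bar>A - C\<bar> \<le> l1_dist ?a ?c" "\<bar>B - E\<bar> \<le> l1_dist ?b ?d" "\<bar>A\<bar> \<le> 1" "\<bar>E\<bar> \<le> 1"
    using Times norms abs_heval_le[of l ?a x] abs_heval_le[of r ?d x]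
    unfolding A_def B_def C_def E_def by fastforce+
  then have "\<bar>A\<bar> * \<bar>B - E\<bar> + \<bar>E\<bar> * \<bar>A - C\<bar> \<le> 1 * l1_dist ?b ?d + 1 * l1_dist ?a ?c"
    by (intro add_mono mult_mono) auto
  moreover have "A * B - C * E = A * (B - E) + E * (A - C)"
    by (simp add: algebra_simps)
  then have "\<bar>A * B - C * E\<bar> \<le> \<bar>A\<bar> * \<bar>B - E\<bar> + \<bar>E\<bar> * \<bar>A - C\<bar>"
    by (metis abs_mult abs_triangle_ineq)
  ultimately have "\<bar>A * B - C * E\<bar> \<le> 1 * l1_dist ?b ?d + 1 * l1_dist ?a ?c"
    by linarith
  then show ?case
    using l1_dist_take_drop[of w v "leaves l"] unfolding A_def B_def C_def E_def by simp
qed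

end

section \<open>Rounding nets of the \<open>l\<^sub>1\<close> unit ball\<close>

text \<open>Rounding towards zero never increases the \<open>l\<^sub>1\<close> norm, so rounded weights stay in the
  unit ball.\<close>

definition round_to_zero :: "real \<Rightarrow> int" where
  "round_to_zero y = (if y \<ge> 0 then \<lfloor>y\<rfloor> else \<lceil>y\<rceil>)"

lemma abs_round_to_zero_le: "\<bar>real_of_int (round_to_zero y)\<bar> \<le> \<bar>y\<bar>"
proof (cases "y \<ge> 0")
  case True
  then show ?thesis by (simp add: round_to_zero_def)
next
  case False
  then have "\<lceil>y\<rceil> \<le> 0" by (simp add: ceiling_le_iff)
  then show ?thesis using False by (simp add: round_to_zero_def)
qed

lemma abs_round_to_zero_diff_le: "\<bar>y - real_of_int (round_to_zero y)\<bar> \<le> 1"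
  unfolding round_to_zero_def by (auto simp: abs_if) linarith+

definition round_weights :: "nat \<Rightarrow> real list \<Rightarrow> real list" where
  "round_weights m w = map (\<lambda>x. real_of_int (round_to_zero (real m * x)) / real m) w"

definition int_l1_ball :: "nat \<Rightarrow> nat \<Rightarrow> int list set" where
  "int_l1_ball l m = {zs. length zs = l \<and> sum_list (map abs zs) \<le> int m}"

definition weight_net :: "nat \<Rightarrow> nat \<Rightarrow> real list set" where
  "weight_net m l = map (\<lambda>z. real_of_int z / real m) ` int_l1_ball l m"

lemma length_round_weights [simp]: "length (round_weights m w) = length w"
  by (simp add: round_weights_def)

lemma l1_dist_round_weights_le:
  assumes "m > 0"
  shows "l1_dist w (round_weights m w) \<le> real (length w) / real m"
proof -
  have err: "\<bar>x - real_of_int (round_to_zero (real m * x)) / real m\<bar> \<le> 1 / real m" for x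
  proof -
    have "\<bar>x - real_of_int (round_to_zero (real m * x)) / real m\<bar>
        = \<bar>real m * x - real_of_int (round_to_zero (real m * x))\<bar> / real m"
      using assms by (simp add: field_simps)
    also have "\<dots> \<le> 1 / real m"
      using abs_round_to_zero_diff_le[of "real m * x"] by (simp add: divide_right_mono)
    finally show ?thesis .
  qed
  show ?thesis
    unfolding l1_dist_def round_weights_def
  proof (induction w)
    case (Cons x w)
    then show ?case using err[of x] by (simp add: add_divide_distrib)
  qed simp
qed

lemma round_weights_in_weight_net:
  assumes "m > 0" "l1_norm w \<le> 1"
  shows "round_weights m w \<in> weight_net m (length w)"
proof -
  let ?zs = "map (\<lambda>x. round_to_zero (real m * x)) w"
  have "real_of_int (sum_list (map abs ?zs))
      = sum_list (map (\<lambda>x. \<bar>real_of_int (round_to_zero (real m * x))\<bar>) w)"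
    by (induction w) auto
  also have "\<dots> \<le> sum_list (map (\<lambda>x. real m * \<bar>x\<bar>) w)"
    by (intro sum_list_mono) (metis abs_mult abs_of_nat abs_round_to_zero_le)
  also have "\<dots> = real m * l1_norm w"
    unfolding l1_norm_def by (induction w) (auto simp: algebra_simps)
  also have "\<dots> \<le> real m"
    using assms by simp
  finally have "?zs \<in> int_l1_ball (length w) m"
    unfolding int_l1_ball_def by simp
  then show ?thesis
    unfolding weight_net_def round_weights_def by force
qed

lemma weight_netD:
  assumes "m > 0" "v \<in> weight_net m l"
  shows "length v = l" "l1_norm v \<le> 1"
proof -
  from assms obtain zs where zs: "zs \<in> int_l1_ball l m" "v = map (\<lambda>z. real_of_int z / real m) zs"
    unfolding weight_net_def by blast
  then show "length v = l"
    by (simp add: int_l1_ball_def)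
  have "l1_norm v = real_of_int (sum_list (map abs zs)) / real m"
    unfolding zs(2) l1_norm_def by (induction zs) (auto simp: add_divide_distrib)
  also have "\<dots> \<le> 1"
    using zs(1) assms(1) by (simp add: int_l1_ball_def divide_le_eq)
  finally show "l1_norm v \<le> 1" .
qed

lemma int_l1_ball_Suc:
  "int_l1_ball (Suc l) m =
     (\<Union>i\<in>{0..m}. (#) (int i) ` int_l1_ball l (m - i)) \<union>
     (\<Union>i\<in>{1..m}. (#) (- int i) ` int_l1_ball l (m - i))"
proof (intro equalityI subsetI)
  fix zs assume "zs \<in> int_l1_ball (Suc l) m"
  then obtain a ys where zs: "zs = a # ys" "length ys = l" "\<bar>a\<bar> + sum_list (map abs ys) \<le> int m"
    unfolding int_l1_ball_def by (cases zs) auto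
  have ys: "sum_list (map abs ys) \<ge> 0"
    by (intro sum_list_nonneg) auto
  show "zs \<in> (\<Union>i\<in>{0..m}. (#) (int i) ` int_l1_ball l (m - i)) \<union>
      (\<Union>i\<in>{1..m}. (#) (- int i) ` int_l1_ball l (m - i))"
  proof (cases "a \<ge> 0")
    case True
    then have "nat a \<in> {0..m}" "ys \<in> int_l1_ball l (m - nat a)" "zs = int (nat a) # ys"
      using zs ys by (auto simp: int_l1_ball_def)
    then show ?thesis by blast
  next
    case False
    then have "nat (- a) \<in> {1..m}" "ys \<in> int_l1_ball l (m - nat (- a))" "zs = - int (nat (- a)) # ys"
      using zs ys by (auto simp: int_l1_ball_def)
    then show ?thesis by blast
  qed
qed (auto simp: int_l1_ball_def)

lemma finite_int_l1_ball: "finite (int_l1_ball l m)"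
  by (induction l arbitrary: m) (auto simp: int_l1_ball_Suc, simp add: int_l1_ball_def)

lemma two_sided_geometric_sum_le:
  fixes x :: real
  assumes x: "0 < x" "x < 1"
  shows "(\<Sum>i\<in>{0..m}. x ^ i) + (\<Sum>i\<in>{1..m}. x ^ i) \<le> (1 + x) / (1 - x)"
proof -
  have "(\<Sum>i\<in>{0..m}. x ^ i) = (\<Sum>i<Suc m. x ^ i)"
    by (simp only: atLeast0AtMost lessThan_Suc_atMost)
  also have "\<dots> = (1 - x ^ Suc m) / (1 - x)"
    using x by (simp only: sum_gp_strict) simp
  finally have a: "(\<Sum>i\<in>{0..m}. x ^ i) = (1 - x ^ Suc m) / (1 - x)" .
  have "(\<Sum>i\<in>{1..m}. x ^ i) = x * (\<Sum>i<m. x ^ i)"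
    by (induction m) (auto simp: algebra_simps)
  also have "\<dots> = x * ((1 - x ^ m) / (1 - x))"
    using x by (simp add: sum_gp_strict)
  finally have b: "(\<Sum>i\<in>{1..m}. x ^ i) = x * (1 - x ^ m) / (1 - x)"
    by simp
  have "x * x ^ m \<ge> 0"
    using x by auto
  then show ?thesis
    unfolding a b using x by (simp add: divide_simps) (simp add: algebra_simps)
qed

text \<open>A generating-function bound: each coordinate of absolute value \<open>i\<close> costs a factor
  \<open>x\<^sup>i\<close>, and \<open>\<Sum>\<^sub>i\<^sub>\<in>\<^sub>\<int> x\<^bsup>\<bar>i\<bar>\<^esup> = (1 + x) / (1 - x)\<close>.\<close>

lemma card_int_l1_ball_le:
  fixes x :: real
  assumes x: "0 < x" "x < 1"
  shows "real (card (int_l1_ball l m)) \<le> (1 / x) ^ m * ((1 + x) / (1 - x)) ^ l"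
proof (induction l arbitrary: m)
  case 0
  have "int_l1_ball 0 m = {[]}"
    by (auto simp: int_l1_ball_def)
  moreover have "1 \<le> (1 / x) ^ m"
    using x by (simp add: one_le_power)
  ultimately show ?case by simp
next
  case (Suc l)
  let ?g = "((1 + x) / (1 - x)) ^ l"
  have IH: "real (card (int_l1_ball l (m - i))) \<le> (1 / x) ^ m * x ^ i * ?g" if "i \<le> m" for i
    using Suc[of "m - i"] that x by (simp add: power_diff power_divide)
  have "real (card (int_l1_ball (Suc l) m))
      \<le> (\<Sum>i\<in>{0..m}. real (card (int_l1_ball l (m - i)))) + (\<Sum>i\<in>{1..m}. real (card (int_l1_ball l (m - i))))"
  proof -
    have "card (int_l1_ball (Suc l) m)
        \<le> (\<Sum>i\<in>{0..m}. card ((#) (int i) ` int_l1_ball l (m - i))) +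
          (\<Sum>i\<in>{1..m}. card ((#) (- int i) ` int_l1_ball l (m - i)))"
      unfolding int_l1_ball_Suc by (intro order.trans[OF card_Un_le] add_mono card_UN_le) auto
    also have "\<dots> \<le> (\<Sum>i\<in>{0..m}. card (int_l1_ball l (m - i))) + (\<Sum>i\<in>{1..m}. card (int_l1_ball l (m - i)))"
      by (intro add_mono sum_mono card_image_le finite_int_l1_ball)
    finally show ?thesis
      by (simp flip: of_nat_sum of_nat_add)
  qed
  also have "\<dots> \<le> (\<Sum>i\<in>{0..m}. (1 / x) ^ m * x ^ i * ?g) + (\<Sum>i\<in>{1..m}. (1 / x) ^ m * x ^ i * ?g)"
    by (intro add_mono sum_mono IH) auto
  also have "\<dots> = (1 / x) ^ m * ?g * ((\<Sum>i\<in>{0..m}. x ^ i) + (\<Sum>i\<in>{1..m}. x ^ i))"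
    by (simp add: sum_distrib_left sum_distrib_right algebra_simps)
  also have "(\<Sum>i\<in>{0..m}. x ^ i) + (\<Sum>i\<in>{1..m}. x ^ i) \<le> (1 + x) / (1 - x)"
    by (rule two_sided_geometric_sum_le[OF x])
  then have "(1 / x) ^ m * ?g * ((\<Sum>i\<in>{0..m}. x ^ i) + (\<Sum>i\<in>{1..m}. x ^ i)) \<le> (1 / x) ^ m * ?g * ((1 + x) / (1 - x))"
    using x by (intro mult_left_mono) auto
  finally show ?case
    by (simp add: mult_ac)
qed

lemma finite_weight_net: "finite (weight_net m l)"
  unfolding weight_net_def by (simp add: finite_int_l1_ball)

lemma card_weight_net_le:
  assumes m: "m > 0" and l: "l \<le> L" "L > 0"
  shows "real (card (weight_net m l)) \<le> exp (real L) * ((2 * real m + real L) / real L) ^ L"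
proof -
  define x where "x = real m / (real m + real L)"
  have x: "0 < x" "x < 1"
    using m l by (auto simp: x_def)
  have "real (card (weight_net m l)) \<le> real (card (int_l1_ball l m))"
    unfolding weight_net_def by (simp add: card_image_le finite_int_l1_ball)
  also have "\<dots> \<le> (1 / x) ^ m * ((1 + x) / (1 - x)) ^ l"
    by (rule card_int_l1_ball_le[OF x])
  also have "1 / x = 1 + real L / real m"
    using m l by (simp add: x_def field_simps)
  also have "(1 + x) / (1 - x) = (2 * real m + real L) / real L"
  proof -
    have "1 + x = (2 * real m + real L) / (real m + real L)" "1 - x = real L / (real m + real L)"
      using m l by (simp_all add: x_def field_simps)
    moreover have "real m + real L > 0"
      using m by simp
    ultimately show ?thesis
      using l by simp
  qed
  also have "(1 + real L / real m) ^ m * ((2 * real m + real L) / real L) ^ l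
      \<le> exp (real L) * ((2 * real m + real L) / real L) ^ L"
  proof (intro mult_mono)
    show "(1 + real L / real m) ^ m \<le> exp (real L)"
      using exp_ge_one_plus_x_over_n_power_n[of m "real L"] m by simp
    show "((2 * real m + real L) / real L) ^ l \<le> ((2 * real m + real L) / real L) ^ L"
      using l by (intro power_increasing) (auto simp: field_simps)
  qed auto
  finally show ?thesis .
qed

lemma card_weight_net_dyadic_le:
  assumes "l \<le> L" "L > 0"
  shows "real (card (weight_net (24 * L * 2 ^ j) l)) \<le> exp (real L * (6 + real j))"
proof -
  have "(2 * real (24 * L * 2 ^ j) + real L) / real L = 48 * 2 ^ j + 1"
    using assms by (simp add: field_simps)
  also have "\<dots> \<le> 49 * 2 ^ j"
    by simp
  also have "\<dots> \<le> exp 5 * exp (real j)"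
  proof -
    have "(49::real) \<le> (1 + 5 / real (10::nat)) ^ 10"
      by (simp add: eval_nat_numeral)
    also have "\<dots> \<le> exp 5"
      by (rule exp_ge_one_plus_x_over_n_power_n) auto
    finally have "(49::real) \<le> exp 5" .
    moreover have "(2::real) ^ j \<le> exp 1 ^ j"
      using exp_ge_add_one_self[of 1] by (intro power_mono) auto
    ultimately show ?thesis
      by (intro mult_mono) (auto simp flip: exp_of_nat_mult)
  qed
  finally have base: "(2 * real (24 * L * 2 ^ j) + real L) / real L \<le> exp (5 + real j)"
    by (simp add: exp_add)
  have "real (card (weight_net (24 * L * 2 ^ j) l))
      \<le> exp (real L) * ((2 * real (24 * L * 2 ^ j) + real L) / real L) ^ L"
    using card_weight_net_le[of "24 * L * 2 ^ j" l L] assms by simp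
  also have "\<dots> \<le> exp (real L) * exp (5 + real j) ^ L"
    using base by (intro mult_left_mono power_mono) auto
  also have "\<dots> = exp (real L * (6 + real j))"
    by (simp add: algebra_simps flip: exp_of_nat_mult exp_add)
  finally show ?thesis .
qed

section \<open>Counting trees\<close>

definition trees_with_leaves :: "nat \<Rightarrow> nat \<Rightarrow> 'p ltree set" where
  "trees_with_leaves q l = {f. valid_tree q f \<and> leaves f = l}"

lemma trees_with_leaves_1: "trees_with_leaves q 1 = case_prod Leaf ` ({1..q} \<times> UNIV)"
proof (intro equalityI subsetI)
  fix f :: "'p ltree" assume f: "f \<in> trees_with_leaves q 1"
  show "f \<in> case_prod Leaf ` ({1..q} \<times> UNIV)"
  proof (cases f)
    case (Leaf i j)
    then show ?thesis using f by (auto simp: trees_with_leaves_def image_iff)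
  next
    case (Plus x y)
    then show ?thesis using f leaves_pos[of x] leaves_pos[of y] by (simp add: trees_with_leaves_def)
  next
    case (Times x y)
    then show ?thesis using f leaves_pos[of x] leaves_pos[of y] by (simp add: trees_with_leaves_def)
  qed
qed (auto simp: trees_with_leaves_def)

lemma trees_with_leaves_split:
  assumes "l \<ge> 2"
  shows "trees_with_leaves q l =
    (\<Union>a\<in>{1..l-1}. case_prod Plus ` (trees_with_leaves q a \<times> trees_with_leaves q (l - a)) \<union>
                   case_prod Times ` (trees_with_leaves q a \<times> trees_with_leaves q (l - a)))"
proof (intro equalityI subsetI)
  fix f :: "'p ltree" assume f: "f \<in> trees_with_leaves q l"
  show "f \<in> (\<Union>a\<in>{1..l-1}. case_prod Plus ` (trees_with_leaves q a \<times> trees_with_leaves q (l - a)) \<union>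
                   case_prod Times ` (trees_with_leaves q a \<times> trees_with_leaves q (l - a)))"
  proof (cases f)
    case (Leaf i j)
    then show ?thesis using f assms by (simp add: trees_with_leaves_def)
  next
    case (Plus x y)
    then have "leaves x \<in> {1..l-1}" "x \<in> trees_with_leaves q (leaves x)" "y \<in> trees_with_leaves q (l - leaves x)"
      using f leaves_pos[of x] leaves_pos[of y] by (auto simp: trees_with_leaves_def)
    then show ?thesis using Plus by blast
  next
    case (Times x y)
    then have "leaves x \<in> {1..l-1}" "x \<in> trees_with_leaves q (leaves x)" "y \<in> trees_with_leaves q (l - leaves x)"
      using f leaves_pos[of x] leaves_pos[of y] by (auto simp: trees_with_leaves_def)
    then show ?thesis using Times by blast
  qed
qed (use assms in \<open>auto simp: trees_with_leaves_def\<close>)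

lemma finite_trees_with_leaves: "finite (trees_with_leaves q l :: ('p::finite) ltree set)"
proof (induction l rule: less_induct)
  case (less l)
  consider "l = 0" | "l = 1" | "l \<ge> 2" by linarith
  then show ?case
  proof cases
    case 1
    have "(trees_with_leaves q 0 :: 'p ltree set) = {}"
      unfolding trees_with_leaves_def using leaves_pos by (metis (mono_tags) Collect_empty_eq not_one_le_zero)
    then show ?thesis using 1 by simp
  next
    case 2
    show ?thesis unfolding 2 trees_with_leaves_1 by simp
  next
    case 3
    have "finite (trees_with_leaves q a \<times> trees_with_leaves q (l - a) :: ('p ltree \<times> 'p ltree) set)"
      if "a \<in> {1..l-1}" for a
      using less that by auto
    then show ?thesis
      unfolding trees_with_leaves_split[OF 3] by blast
  qed
qed

lemma card_trees_with_leaves_split_le: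
  assumes "l \<ge> 2"
  shows "card (trees_with_leaves q l :: ('p::finite) ltree set)
    \<le> (\<Sum>a\<in>{1..l-1}. 2 * (card (trees_with_leaves q a :: 'p ltree set) * card (trees_with_leaves q (l - a) :: 'p ltree set)))"
proof -
  let ?T = "trees_with_leaves q :: nat \<Rightarrow> 'p ltree set"
  have "card (?T l) \<le> (\<Sum>a\<in>{1..l-1}. card (case_prod Plus ` (?T a \<times> ?T (l - a)) \<union> case_prod Times ` (?T a \<times> ?T (l - a))))"
    unfolding trees_with_leaves_split[OF assms] by (rule card_UN_le) simp
  also have "\<dots> \<le> (\<Sum>a\<in>{1..l-1}. 2 * (card (?T a) * card (?T (l - a))))"
  proof (rule sum_mono)
    fix a
    have "card (case_prod Plus ` (?T a \<times> ?T (l - a)) \<union> case_prod Times ` (?T a \<times> ?T (l - a)))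
        \<le> card (case_prod Plus ` (?T a \<times> ?T (l - a))) + card (case_prod Times ` (?T a \<times> ?T (l - a)))"
      by (rule card_Un_le)
    also have "\<dots> \<le> card (?T a \<times> ?T (l - a)) + card (?T a \<times> ?T (l - a))"
      by (intro add_mono card_image_le) (simp_all add: finite_trees_with_leaves)
    finally show "card (case_prod Plus ` (?T a \<times> ?T (l - a)) \<union> case_prod Times ` (?T a \<times> ?T (l - a)))
        \<le> 2 * (card (?T a) * card (?T (l - a)))"
      by (simp add: card_cartesian_product)
  qed
  finally show ?thesis .
qed

lemma fact_mult_fact_le: "fact a * fact b \<le> (fact (a + b) :: real)"
proof -
  have "fact a * fact b * ((a + b) choose a) = (fact (a + b) :: nat)"
    using binomial_fact_lemma[of a "a + b"] by simp
  then have "fact a * fact b \<le> (fact (a + b) :: nat)"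
    by (metis dvd_imp_le dvd_triv_left fact_gt_zero)
  then show ?thesis
    by (metis of_nat_fact of_nat_le_iff of_nat_mult)
qed

lemma tree_count_product_le:
  fixes c :: real
  assumes "c \<ge> 0" "1 \<le> a" "a < l"
  shows "2 * ((2 ^ (a - 1) * fact (a - 1) * c ^ a) * (2 ^ (l - a - 1) * fact (l - a - 1) * c ^ (l - a)))
    \<le> 2 ^ (l - 1) * fact (l - 2) * c ^ l"
proof -
  have two: "2 * (2::real) ^ (a - 1) * 2 ^ (l - a - 1) = 2 ^ (l - 1)"
  proof -
    have e: "l - 1 = Suc ((a - 1) + (l - a - 1))"
      using assms by auto
    show ?thesis unfolding e by (simp add: power_add)
  qed
  have "a + (l - a) = l"
    using assms by auto
  then have cc: "c ^ a * c ^ (l - a) = c ^ l"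
    by (metis power_add)
  have "2 * ((2 ^ (a - 1) * fact (a - 1) * c ^ a) * (2 ^ (l - a - 1) * fact (l - a - 1) * c ^ (l - a)))
      = (2 * (2::real) ^ (a - 1) * 2 ^ (l - a - 1)) * (fact (a - 1) * fact (l - a - 1)) * (c ^ a * c ^ (l - a))"
    by (simp only: mult_ac)
  also have "\<dots> = 2 ^ (l - 1) * (fact (a - 1) * fact (l - a - 1)) * c ^ l"
    by (simp only: two cc)
  also have "\<dots> \<le> 2 ^ (l - 1) * fact (l - 2) * c ^ l"
    using fact_mult_fact_le[of "a - 1" "l - a - 1"] assms
    by (intro mult_right_mono mult_left_mono) (simp_all add: numeral_2_eq_2)
  finally show ?thesis .
qed

lemma card_trees_with_leaves_le:
  assumes "l \<ge> 1"
  shows "real (card (trees_with_leaves q l :: ('p::finite) ltree set))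
    \<le> 2 ^ (l - 1) * fact (l - 1) * (real CARD('p) * real q) ^ l"
  using assms
proof (induction l rule: less_induct)
  case (less l)
  define c where "c = real CARD('p) * real q"
  let ?T = "trees_with_leaves q :: nat \<Rightarrow> 'p ltree set"
  show ?case
  proof (cases "l = 1")
    case True
    have "card (?T 1) \<le> card ({1..q} \<times> (UNIV :: 'p set))"
      unfolding trees_with_leaves_1 by (rule card_image_le) simp
    then show ?thesis
      using True by (simp add: card_cartesian_product mult.commute flip: of_nat_mult)
  next
    case False
    then have l: "l \<ge> 2" using less.prems by simp
    have term_le: "2 * (real (card (?T a)) * real (card (?T (l - a)))) \<le> 2 ^ (l - 1) * fact (l - 2) * c ^ l"
      if a: "a \<in> {1..l-1}" for a
    proof -
      have "2 * (real (card (?T a)) * real (card (?T (l - a))))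
          \<le> 2 * ((2 ^ (a - 1) * fact (a - 1) * c ^ a) * (2 ^ (l - a - 1) * fact (l - a - 1) * c ^ (l - a)))"
        using less.IH[of a] less.IH[of "l - a"] a by (intro mult_left_mono mult_mono) (auto simp: c_def)
      also have "\<dots> \<le> 2 ^ (l - 1) * fact (l - 2) * c ^ l"
        using a by (intro tree_count_product_le) (auto simp: c_def)
      finally show ?thesis .
    qed
    have "real (card (?T l)) \<le> real (\<Sum>a\<in>{1..l-1}. 2 * (card (?T a) * card (?T (l - a))))"
      using card_trees_with_leaves_split_le[OF l, of q] by (simp only: of_nat_le_iff)
    also have "\<dots> = (\<Sum>a\<in>{1..l-1}. 2 * (real (card (?T a)) * real (card (?T (l - a)))))"
      by simp
    also have "\<dots> \<le> (\<Sum>a\<in>{1..l-1}. 2 ^ (l - 1) * fact (l - 2) * c ^ l)"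
      by (intro sum_mono term_le)
    also have "\<dots> = 2 ^ (l - 1) * (real (l - 1) * fact (l - 2)) * c ^ l"
      by (simp add: algebra_simps)
    also have "real (l - 1) * fact (l - 2) = (fact (l - 1) :: real)"
    proof -
      obtain t where "l = Suc (Suc t)"
        using l by (metis add_2_eq_Suc le_Suc_ex)
      then show ?thesis by (simp add: fact_Suc)
    qed
    finally show ?thesis by (simp add: c_def)
  qed
qed

definition num_trees_bound :: "nat \<Rightarrow> nat \<Rightarrow> nat \<Rightarrow> real" where
  "num_trees_bound p q k = real (k + 1) * 2 ^ k * fact k * (real p * real q) ^ (k + 1)"

lemma trees_subset_trees_with_leaves:
  "trees q (2 * k + 1) \<subseteq> (\<Union>l\<in>{1..k+1}. trees_with_leaves q l)"
proof
  fix f :: "'p ltree"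
  assume "f \<in> trees q (2 * k + 1)"
  then have "valid_tree q f" "leaves f \<in> {1..k+1}"
    using nodes_eq_leaves[of f] leaves_pos[of f] by (auto simp: trees_def)
  then show "f \<in> (\<Union>l\<in>{1..k+1}. trees_with_leaves q l)"
    by (auto simp: trees_with_leaves_def)
qed

lemma finite_trees: "finite (trees q (2 * k + 1) :: ('p::finite) ltree set)"
  by (rule finite_subset[OF trees_subset_trees_with_leaves]) (simp add: finite_trees_with_leaves)

lemma card_trees_le:
  assumes "q \<ge> 1"
  shows "real (card (trees q (2 * k + 1) :: ('p::finite) ltree set)) \<le> num_trees_bound CARD('p) q k"
proof -
  let ?T = "trees_with_leaves q :: nat \<Rightarrow> 'p ltree set"
  define c where "c = real CARD('p) * real q"
  have "real CARD('p) \<ge> 1" "real q \<ge> 1"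
    using assms by (simp_all add: Suc_leI finite_UNIV_card_ge_0)
  then have "(1::real) * 1 \<le> c"
    unfolding c_def by (intro mult_mono) auto
  then have c: "c \<ge> 1"
    by simp
  have "card (trees q (2 * k + 1) :: 'p ltree set) \<le> card (\<Union>l\<in>{1..k+1}. ?T l)"
    by (intro card_mono trees_subset_trees_with_leaves) (simp add: finite_trees_with_leaves)
  also have "\<dots> \<le> (\<Sum>l\<in>{1..k+1}. card (?T l))"
    by (rule card_UN_le) simp
  finally have "real (card (trees q (2 * k + 1) :: 'p ltree set)) \<le> (\<Sum>l\<in>{1..k+1}. real (card (?T l)))"
    by (simp flip: of_nat_sum)
  also have "\<dots> \<le> (\<Sum>l\<in>{1..k+1}. 2 ^ k * fact k * c ^ (k + 1))"
  proof (intro sum_mono)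
    fix l assume l: "l \<in> {1..k+1}"
    then have "real (card (?T l)) \<le> 2 ^ (l - 1) * fact (l - 1) * c ^ l"
      using card_trees_with_leaves_le[of l q] by (simp add: c_def)
    also have "\<dots> \<le> 2 ^ k * fact k * c ^ (k + 1)"
      using l c by (intro mult_mono power_increasing fact_mono) auto
    finally show "real (card (?T l)) \<le> 2 ^ k * fact k * c ^ (k + 1)" .
  qed
  finally show ?thesis
    by (simp add: num_trees_bound_def c_def)
qed

section \<open>Arithmetic of the chaining bound\<close>

lemma ln_2_le_1: "ln (2::real) \<le> 1"
  using ln_le_minus_one[of 2] by simp

lemma sum_inverse_power2_le: "(\<Sum>j\<in>{1..J}. 1 / 2 ^ (j + 1) :: real) \<le> 1 / 2"
proof -
  have "(\<Sum>j\<in>{1..J}. 1 / 2 ^ (j + 1) :: real) = 1 / 2 - 1 / 2 ^ (J + 1)"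
    by (induction J) (auto simp: field_simps)
  then show ?thesis by simp
qed

lemma sum_times_inverse_power2_le: "(\<Sum>j\<in>{1..J}. real j / 2 ^ (j + 1)) \<le> 1"
proof -
  have "(\<Sum>j\<in>{1..J}. real j / 2 ^ (j + 1)) = 1 - (real J + 2) / 2 ^ (J + 1)"
    by (induction J) (auto simp: field_simps)
  then show ?thesis by simp
qed

lemma mult_sqrt_le_amgm:
  fixes a c n \<epsilon> M \<theta> :: real
  assumes "a \<ge> 0" "c \<ge> 0" "\<theta> > 0" "M > 0" "\<epsilon> > 0" "n > 0" and "M \<le> 2 * n * \<epsilon>\<^sup>2"
  shows "c * sqrt (a / (2 * n)) \<le> \<epsilon> / 2 * (c\<^sup>2 * a / (M * \<theta>) + \<theta>)"
proof -
  have "1 / (2 * n) \<le> \<epsilon>\<^sup>2 / M"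
    using assms by (simp add: field_simps)
  then have "c\<^sup>2 * a * (1 / (2 * n)) \<le> c\<^sup>2 * a * (\<epsilon>\<^sup>2 / M)"
    using assms by (intro mult_left_mono) auto
  have "c * sqrt (a / (2 * n)) = sqrt (c\<^sup>2 * a * (1 / (2 * n)))"
    using assms by (simp add: real_sqrt_mult real_sqrt_divide)
  also have "\<dots> \<le> sqrt (c\<^sup>2 * a * (\<epsilon>\<^sup>2 / M))"
    by (rule real_sqrt_le_mono) fact
  also have "\<dots> = \<epsilon> * sqrt (c\<^sup>2 * a / (M * \<theta>) * \<theta>)"
    using assms by (simp add: real_sqrt_mult real_sqrt_divide)
  also have "\<dots> \<le> \<epsilon> * ((c\<^sup>2 * a / (M * \<theta>) + \<theta>) / 2)"
    using assms by (intro mult_left_mono arith_geo_mean_sqrt) auto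
  finally show ?thesis
    by simp
qed

text \<open>If \<open>e\<^sup>K\<close> bounds the number of trees and
  \<open>\<Lambda> = ln (2 / \<delta>)\<close>, then \<open>e\<^bsup>-chaining_conf0\<^esup>\<close> times the number \<open>e\<^bsup>K + 6 L\<^esup>\<close> of tests at
  level 0 is \<open>\<delta> / 4\<close>, and \<open>e\<^bsup>-chaining_conf j\<^esup>\<close> times the number \<open>e\<^bsup>K + L (6 + j) + L (5 + j)\<^esup>\<close>
  of tests at level \<open>j\<close> is \<open>\<delta> / 2\<^bsup>j+2\<^esup>\<close>.\<close>

definition chaining_conf0 :: "real \<Rightarrow> nat \<Rightarrow> real \<Rightarrow> real" where
  "chaining_conf0 K L \<Lambda> = K + 6 * real L + \<Lambda> + ln 2"

definition chaining_conf :: "real \<Rightarrow> nat \<Rightarrow> real \<Rightarrow> nat \<Rightarrow> real" where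
  "chaining_conf K L \<Lambda> j = K + real L * (6 + real j) + real L * (5 + real j) + \<Lambda> + (real j + 1) * ln 2"

definition chaining_bound :: "nat \<Rightarrow> real \<Rightarrow> (nat \<Rightarrow> real) \<Rightarrow> nat \<Rightarrow> real" where
  "chaining_bound n B0 B J = sqrt (B0 / (2 * real n))
     + (\<Sum>j\<in>{1..J}. 1 / (4 * 2 ^ j) * sqrt (B j / (2 * real n))) + 1 / (12 * 2 ^ J)"

lemma chaining_conf_nonneg:
  "K \<ge> 0 \<Longrightarrow> \<Lambda> \<ge> 0 \<Longrightarrow> chaining_conf0 K L \<Lambda> \<ge> 0 \<and> chaining_conf K L \<Lambda> j \<ge> 0"
  by (simp add: chaining_conf0_def chaining_conf_def)

lemma sum_chaining_conf_le:
  assumes "K \<ge> 0" "\<Lambda> \<ge> 0"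
  shows "(\<Sum>j\<in>{1..J}. chaining_conf K L \<Lambda> j / 2 ^ (j + 1))
    \<le> (K + 11 * real L + \<Lambda> + ln 2) / 2 + (2 * real L + ln 2)"
proof -
  define C where "C = K + 11 * real L + \<Lambda> + ln 2"
  have "C \<ge> 0"
    using assms by (simp add: C_def)
  have "(\<Sum>j\<in>{1..J}. chaining_conf K L \<Lambda> j / 2 ^ (j + 1))
      = C * (\<Sum>j\<in>{1..J}. 1 / 2 ^ (j + 1)) + (2 * real L + ln 2) * (\<Sum>j\<in>{1..J}. real j / 2 ^ (j + 1))"
    unfolding C_def chaining_conf_def
    by (simp add: sum_distrib_left sum.distrib add_divide_distrib algebra_simps)
  also have "\<dots> \<le> C * (1 / 2) + (2 * real L + ln 2) * 1"
    using \<open>C \<ge> 0\<close> sum_inverse_power2_le sum_times_inverse_power2_le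
    by (intro add_mono mult_left_mono) auto
  finally show ?thesis
    by (simp add: C_def)
qed

lemma chaining_budget_le:
  fixes K \<Lambda> lq lf lf' :: real and L :: nat
  assumes \<Lambda>: "\<Lambda> \<ge> 0" and K: "K \<le> real L * lq + lf + 2 * real L"
    and lq: "lq \<ge> 0" and lf: "0 \<le> lf" "lf \<le> lf'" and L: "L \<ge> 2"
  shows "5 / 3 * chaining_conf0 K L \<Lambda> + ((K + 11 * real L + \<Lambda> + ln 2) / 2 + (2 * real L + ln 2))
      + 40 / 11 * \<Lambda> \<le> 998 / 1000 * (3 * real L * (lq + 8) + 3 * lf' + 6 * \<Lambda>)"
proof -
  have "5 / 3 * chaining_conf0 K L \<Lambda> + ((K + 11 * real L + \<Lambda> + ln 2) / 2 + (2 * real L + ln 2)) + 40 / 11 * \<Lambda>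
      = 13 / 6 * K + 35 / 2 * real L + (13 / 6 + 40 / 11) * \<Lambda> + 19 / 6 * ln 2"
    by (simp add: chaining_conf0_def add_divide_distrib algebra_simps)
  also have "\<dots> \<le> 13 / 6 * (real L * lq + lf + 2 * real L) + 35 / 2 * real L + (13 / 6 + 40 / 11) * \<Lambda> + 19 / 6"
    using K ln_2_le_1 by (intro add_mono) auto
  also have "\<dots> \<le> 998 / 1000 * (3 * real L * (lq + 8) + 3 * lf' + 6 * \<Lambda>)"
  proof -
    have linear: "13 / 6 * (P + lf + 2 * x) + 35 / 2 * x + (13 / 6 + 40 / 11) * \<Lambda> + 19 / 6
        \<le> 998 / 1000 * (3 * P + 24 * x + 3 * lf' + 6 * \<Lambda>)" if "P \<ge> 0" "x \<ge> 2" for P x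
      using that lf \<Lambda> by (simp add: field_simps)
    have "3 * real L * (lq + 8) + 3 * lf' + 6 * \<Lambda> = 3 * (real L * lq) + 24 * real L + 3 * lf' + 6 * \<Lambda>"
      by (simp add: algebra_simps)
    then show ?thesis
      using linear[of "real L * lq" "real L"] lq L by simp
  qed
  finally show ?thesis .
qed

text \<open>Each square root is split by AM-GM with a weight \<open>\<theta>\<close>; the weights \<open>3/5\<close>, \<open>1/(8\<cdot>2\<^sup>j)\<close> and
  \<open>11/40\<close> add up to at most \<open>1\<close>, and the remaining terms are at most \<open>998/1000\<close> of the sample-size
  budget \<open>M\<close>.\<close>

lemma chaining_sum_le:
  fixes n \<epsilon> \<Lambda> K lq lf lf' :: real and L J :: nat
  assumes n: "n > 0" and \<epsilon>: "\<epsilon> > 0" and \<Lambda>: "\<Lambda> \<ge> 0" and K: "0 \<le> K" "K \<le> real L * lq + lf + 2 * real L"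
    and lq: "lq \<ge> 0" and lf: "0 \<le> lf" "lf \<le> lf'" and L: "L \<ge> 2"
    and budget: "3 * real L * (lq + 8) + 3 * lf' + 6 * \<Lambda> \<le> 2 * n * \<epsilon>\<^sup>2"
  shows "sqrt (chaining_conf0 K L \<Lambda> / (2 * n))
      + (\<Sum>j\<in>{1..J}. 1 / (4 * 2 ^ j) * sqrt (chaining_conf K L \<Lambda> j / (2 * n)))
      + sqrt (\<Lambda> / (2 * n)) \<le> 999 / 1000 * \<epsilon>"
proof -
  define M where "M = 3 * real L * (lq + 8) + 3 * lf' + 6 * \<Lambda>"
  have M: "M > 0" "M \<le> 2 * n * \<epsilon>\<^sup>2"
    using L lq lf \<Lambda> budget by (simp_all add: M_def add_pos_nonneg)
  define B0 B where "B0 = chaining_conf0 K L \<Lambda>" and "B = chaining_conf K L \<Lambda>"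
  have B: "B0 \<ge> 0" "B j \<ge> 0" for j
    using chaining_conf_nonneg[OF K(1) \<Lambda>] by (simp_all add: B0_def B_def)
  have level0: "sqrt (B0 / (2 * n)) \<le> \<epsilon> / 2 * (B0 / (M * (3 / 5)) + 3 / 5)"
    using mult_sqrt_le_amgm[OF B(1) _ _ M(1) \<epsilon> n M(2), of 1 "3/5"] by simp
  have tail: "sqrt (\<Lambda> / (2 * n)) \<le> \<epsilon> / 2 * (\<Lambda> / (M * (11 / 40)) + 11 / 40)"
    using mult_sqrt_le_amgm[OF \<Lambda> _ _ M(1) \<epsilon> n M(2), of 1 "11/40"] by simp
  have level: "1 / (4 * 2 ^ j) * sqrt (B j / (2 * n)) \<le> \<epsilon> / 2 * (B j / 2 ^ (j + 1) / M + 1 / (8 * 2 ^ j))"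
    for j
  proof -
    have "1 / (4 * 2 ^ j) * sqrt (B j / (2 * n))
        \<le> \<epsilon> / 2 * ((1 / (4 * 2 ^ j))\<^sup>2 * B j / (M * (1 / (8 * 2 ^ j))) + 1 / (8 * 2 ^ j))"
      by (rule mult_sqrt_le_amgm[OF B(2) _ _ M(1) \<epsilon> n M(2)]) simp_all
    also have "(1 / (4 * 2 ^ j))\<^sup>2 * B j / (M * (1 / (8 * 2 ^ j))) = B j / 2 ^ (j + 1) / M"
      using M by (simp add: field_simps power2_eq_square)
    finally show ?thesis .
  qed
  have "(\<Sum>j\<in>{1..J}. 1 / (4 * 2 ^ j) * sqrt (B j / (2 * n)))
      \<le> (\<Sum>j\<in>{1..J}. \<epsilon> / 2 * (B j / 2 ^ (j + 1) / M + 1 / (8 * 2 ^ j)))"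
    by (intro sum_mono level)
  also have "\<dots> = \<epsilon> / 2 * ((\<Sum>j\<in>{1..J}. B j / 2 ^ (j + 1)) / M + (1 / 4) * (\<Sum>j\<in>{1..J}. 1 / 2 ^ (j + 1)))"
    by (simp add: sum_distrib_left sum.distrib sum_divide_distrib algebra_simps)
  also have "\<dots> \<le> \<epsilon> / 2 * (((K + 11 * real L + \<Lambda> + ln 2) / 2 + (2 * real L + ln 2)) / M + (1 / 4) * (1 / 2))"
    using sum_chaining_conf_le[OF K(1) \<Lambda>, where J = J and L = L] sum_inverse_power2_le[of J] M \<epsilon>
    unfolding B_def by (intro mult_left_mono add_mono divide_right_mono) auto
  finally have levels: "(\<Sum>j\<in>{1..J}. 1 / (4 * 2 ^ j) * sqrt (B j / (2 * n)))
      \<le> \<epsilon> / 2 * (((K + 11 * real L + \<Lambda> + ln 2) / 2 + (2 * real L + ln 2)) / M + 1 / 8)"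
    by simp
  have budget_split: "5 / 3 * B0 + ((K + 11 * real L + \<Lambda> + ln 2) / 2 + (2 * real L + ln 2)) + 40 / 11 * \<Lambda>
      \<le> 998 / 1000 * M"
    unfolding B0_def M_def by (rule chaining_budget_le[OF \<Lambda> K(2) lq lf L])
  have "sqrt (B0 / (2 * n)) + (\<Sum>j\<in>{1..J}. 1 / (4 * 2 ^ j) * sqrt (B j / (2 * n))) + sqrt (\<Lambda> / (2 * n))
      \<le> \<epsilon> / 2 * ((5 / 3 * B0 + ((K + 11 * real L + \<Lambda> + ln 2) / 2 + (2 * real L + ln 2)) + 40 / 11 * \<Lambda>) / M + 1)"
    using level0 levels tail M by (simp add: field_simps)
  also have "\<dots> \<le> \<epsilon> / 2 * (998 / 1000 * M / M + 1)"
    using budget_split M \<epsilon> by (intro mult_left_mono add_mono divide_right_mono) auto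
  also have "\<dots> = 999 / 1000 * \<epsilon>"
    using M by simp
  finally show ?thesis
    by (simp add: B0_def B_def)
qed

lemma num_trees_bound_ge_1:
  assumes "p \<ge> 1" "q \<ge> 1"
  shows "num_trees_bound p q k \<ge> 1"
proof -
  have "(1::real) * 1 \<le> real p * real q"
    using assms by (intro mult_mono) auto
  then have "(1::real) * 1 * 1 * 1 \<le> real (k + 1) * 2 ^ k * fact k * (real p * real q) ^ (k + 1)"
    by (intro mult_mono one_le_power) auto
  then show ?thesis
    by (simp add: num_trees_bound_def)
qed

lemma ln_num_trees_bound_le:
  assumes "p \<ge> 1" "q \<ge> 1"
  shows "ln (num_trees_bound p q k) \<le> real (k + 1) * ln (real (p * q)) + ln (fact k) + 2 * real (k + 1)"
proof -
  define c where "c = real (p * q)"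
  have c: "c > 0"
    using assms by (simp add: c_def)
  have "num_trees_bound p q k = real (k + 1) * 2 ^ k * fact k * c ^ (k + 1)"
    by (simp add: num_trees_bound_def c_def)
  then have "ln (num_trees_bound p q k) = ln (real (k + 1)) + ln (2 ^ k) + ln (fact k) + ln (c ^ (k + 1))"
    using c by (simp add: ln_mult)
  also have "\<dots> = ln (real (k + 1)) + real k * ln 2 + ln (fact k) + real (k + 1) * ln (real (p * q))"
    using ln_realpow[of c "k + 1"] ln_realpow[of 2 k] by (simp add: c_def)
  finally have "ln (num_trees_bound p q k)
      = ln (real (k + 1)) + real k * ln 2 + ln (fact k) + real (k + 1) * ln (real (p * q))" .
  moreover have "ln (real (k + 1)) \<le> real k"
    using ln_add_one_self_le_self[of "real k"] by (simp add: add.commute)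
  moreover have "real k * ln 2 \<le> real k"
    using ln_2_le_1 mult_left_mono[of "ln 2" 1 "real k"] by simp
  ultimately show ?thesis
    by simp
qed

lemma sample_size_suffices:
  fixes p q k n :: nat and \<delta> \<epsilon> :: real
  assumes p: "p \<ge> 1" and q: "q \<ge> 1" and k: "k \<ge> 1" and \<delta>: "\<delta> \<in> {0<..<1}" and \<epsilon>: "\<epsilon> > 0"
    and n_bound: "real n \<ge> (3 * (real k + 1) * (ln (real (p * q)) + 8)
        + 3 * ln (8 * real k * fact k) + 6 * ln (2 / \<delta>)) / (2 * \<epsilon>\<^sup>2)"
  shows "n > 0"
    and "\<exists>J. chaining_bound n (chaining_conf0 (ln (num_trees_bound p q k)) (k + 1) (ln (2 / \<delta>)))
                (chaining_conf (ln (num_trees_bound p q k)) (k + 1) (ln (2 / \<delta>))) J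
              + sqrt (ln (2 / \<delta>) / (2 * real n)) \<le> \<epsilon>"
proof -
  define K \<Lambda> where "K = ln (num_trees_bound p q k)" and "\<Lambda> = ln (2 / \<delta>)"
  define lq lf lf' where "lq = ln (real (p * q))" and "lf = ln (fact k :: real)"
    and "lf' = ln (8 * real k * fact k)"
  have \<Lambda>: "\<Lambda> > 0"
    using \<delta> by (simp add: \<Lambda>_def)
  have "(1::real) \<le> real (p * q)"
    using p q by (metis mult_le_mono nat_mult_1 of_nat_1 of_nat_le_iff)
  then have lq: "lq \<ge> 0"
    by (simp add: lq_def)
  have lf: "0 \<le> lf" "lf \<le> lf'"
    using k by (auto simp: lf_def lf'_def intro!: ln_mono)
  have M: "0 < 3 * real (k + 1) * (lq + 8) + 3 * lf' + 6 * \<Lambda>"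
    using \<Lambda> lq lf by (simp add: add_pos_nonneg)
  have "3 * (real k + 1) * (lq + 8) + 3 * lf' + 6 * \<Lambda> \<le> real n * (2 * \<epsilon>\<^sup>2)"
    using n_bound \<epsilon> unfolding lq_def lf'_def \<Lambda>_def by (simp add: pos_divide_le_eq)
  then have budget: "3 * real (k + 1) * (lq + 8) + 3 * lf' + 6 * \<Lambda> \<le> 2 * real n * \<epsilon>\<^sup>2"
    by (simp add: algebra_simps)
  then have "0 < 2 * real n * \<epsilon>\<^sup>2"
    using M by linarith
  then show n: "n > 0"
    by (simp add: zero_less_mult_iff)
  obtain J :: nat where J: "1000 / (12 * \<epsilon>) < 2 ^ J"
    using real_arch_pow[of 2 "1000 / (12 * \<epsilon>)"] by auto
  have "1 / (12 * 2 ^ J) \<le> \<epsilon> / 1000"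
    using J \<epsilon> by (simp add: field_simps)
  moreover have "sqrt (chaining_conf0 K (k + 1) \<Lambda> / (2 * real n))
      + (\<Sum>j\<in>{1..J}. 1 / (4 * 2 ^ j) * sqrt (chaining_conf K (k + 1) \<Lambda> j / (2 * real n)))
      + sqrt (\<Lambda> / (2 * real n)) \<le> 999 / 1000 * \<epsilon>"
  proof (rule chaining_sum_le[OF _ \<epsilon> _ _ _ lq lf _ budget])
    show "K \<le> real (k + 1) * lq + lf + 2 * real (k + 1)"
      using ln_num_trees_bound_le[OF p q, of k] by (simp add: K_def lq_def lf_def)
    show "0 \<le> K"
      using num_trees_bound_ge_1[OF p q, of k] by (simp add: K_def)
  qed (use n \<Lambda> k in auto)
  ultimately show "\<exists>J. chaining_bound n (chaining_conf0 K (k + 1) \<Lambda>) (chaining_conf K (k + 1) \<Lambda>) J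
      + sqrt (\<Lambda> / (2 * real n)) \<le> \<epsilon>"
    unfolding chaining_bound_def by (intro exI[of _ J]) simp
qed

section \<open>Chaining\<close>

definition tree_loss :: "(real \<Rightarrow> real \<Rightarrow> real) \<Rightarrow> (nat \<Rightarrow> real \<Rightarrow> real) \<Rightarrow> ('p::finite) ltree \<Rightarrow> real list
    \<Rightarrow> (real ^ 'p) \<times> real \<Rightarrow> real" where
  "tree_loss d \<phi> f w = (\<lambda>(x, y). d y (heval \<phi> f w x))"

lemma mem_Hm_iff:
  "h \<in> Hm d \<phi> q m \<longleftrightarrow>
    (\<exists>f w. f \<in> trees q m \<and> length w = leaves f \<and> l1_norm w \<le> 1 \<and> h = tree_loss d \<phi> f w)"
  unfolding Hm_def Hclass_def Wclass_def l1_norm_def tree_loss_def by blast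

locale tree_learning =
  fixes q k n :: nat and \<phi> :: "nat \<Rightarrow> real \<Rightarrow> real" and Y :: "real set"
    and d :: "real \<Rightarrow> real \<Rightarrow> real" and D :: "((real ^ 'p::finite) \<times> real) measure"
  assumes q: "q \<ge> 1" and n: "n > 0"
    and phi_bound: "\<And>i t. i \<in> {1..q} \<Longrightarrow> \<bar>\<phi> i t\<bar> \<le> 1"
    and d_range: "\<And>y t. y \<in> Y \<Longrightarrow> d y t \<in> {0..1}"
    and d_lip: "\<And>y s t. y \<in> Y \<Longrightarrow> \<bar>d y s - d y t\<bar> \<le> \<bar>s - t\<bar>"
    and D: "prob_space D"
    and D_Y: "AE z in D. snd z \<in> Y"
    and H_measurable: "\<And>h. h \<in> Hm d \<phi> q (2 * k + 1) \<Longrightarrow> h \<in> borel_measurable D"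
begin

abbreviation "H \<equiv> Hm d \<phi> q (2 * k + 1)"
abbreviation "F \<equiv> trees q (2 * k + 1) :: 'p ltree set"
abbreviation "P \<equiv> PiM {..<n} (\<lambda>_. D)"

lemma prob_space_P: "prob_space P"
  by (rule prob_space_PiM) (rule D)

lemma H_range: "h \<in> H \<Longrightarrow> snd z \<in> Y \<Longrightarrow> h z \<in> {0..1}"
  using d_range by (cases z) (auto simp: mem_Hm_iff tree_loss_def)

lemma H_AE_range: "h \<in> H \<Longrightarrow> AE z in D. h z \<in> {0..1}"
  using D_Y by eventually_elim (rule H_range)

lemma H_integrable:
  assumes "h \<in> H"
  shows "integrable D h"
proof -
  interpret D: prob_space D by (rule D)
  have "AE z in D. norm (h z) \<le> 1"
    using H_AE_range[OF assms] by eventually_elim auto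
  then show ?thesis
    using H_measurable[OF assms] by (intro D.integrable_const_bound[where B = 1]) auto
qed

lemma tree_loss_in_H: "f \<in> F \<Longrightarrow> length w = leaves f \<Longrightarrow> l1_norm w \<le> 1 \<Longrightarrow> tree_loss d \<phi> f w \<in> H"
  unfolding mem_Hm_iff by blast

lemma abs_tree_loss_diff_le:
  assumes "f \<in> F" "length w = leaves f" "length v = leaves f" "l1_norm w \<le> 1" "l1_norm v \<le> 1"
    and "snd z \<in> Y"
  shows "\<bar>tree_loss d \<phi> f w z - tree_loss d \<phi> f v z\<bar> \<le> l1_dist w v"
proof -
  obtain x y where z: "z = (x, y)" by (cases z)
  have "valid_tree q f"
    using assms(1) by (simp add: trees_def)
  have "\<bar>d y (heval \<phi> f w x) - d y (heval \<phi> f v x)\<bar> \<le> \<bar>heval \<phi> f w x - heval \<phi> f v x\<bar>"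
    using d_lip assms(6) z by simp
  also have "\<dots> \<le> l1_dist w v"
    by (rule abs_heval_diff_le[where q = q]) (use phi_bound \<open>valid_tree q f\<close> assms(2-5) in simp_all)
  finally show ?thesis
    by (simp add: tree_loss_def z)
qed

definition dev :: "(nat \<Rightarrow> (real ^ 'p) \<times> real) \<Rightarrow> ((real ^ 'p) \<times> real \<Rightarrow> real) \<Rightarrow> real" where
  "dev S g = integral\<^sup>L D g - emp_risk n S g"

lemma dev_diff:
  "integrable D g \<Longrightarrow> integrable D g' \<Longrightarrow> dev S (\<lambda>z. g z - g' z) = dev S g - dev S g'"
  unfolding dev_def emp_risk_def by (simp add: sum_subtractf diff_divide_distrib)

lemma dev_less_if_notin_lower_tail:
  "S \<in> space P \<Longrightarrow> S \<notin> emp_risk_lower_tail n D g s \<Longrightarrow> dev S g < s"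
  unfolding emp_risk_lower_tail_def dev_def by auto

lemma dev_le_if_close:
  assumes g: "integrable D g" "integrable D g'"
    and S: "\<And>i. i < n \<Longrightarrow> snd (S i) \<in> Y"
    and close: "\<And>z. snd z \<in> Y \<Longrightarrow> \<bar>g z - g' z\<bar> \<le> r"
  shows "dev S g \<le> dev S g' + 2 * r"
proof -
  interpret D: prob_space D by (rule D)
  have "integral\<^sup>L D g - integral\<^sup>L D g' = integral\<^sup>L D (\<lambda>z. g z - g' z)"
    using g by simp
  also have "\<dots> \<le> integral\<^sup>L D (\<lambda>_. r)"
  proof (intro integral_mono_AE)
    show "AE z in D. g z - g' z \<le> r"
      using D_Y by eventually_elim (use close in \<open>auto simp: abs_le_iff\<close>)
  qed (use g in auto)
  finally have "integral\<^sup>L D g - integral\<^sup>L D g' \<le> r"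
    by (simp add: D.prob_space)
  moreover have "(\<Sum>i<n. g' (S i) - g (S i)) \<le> (\<Sum>i<n. r)"
    using S close by (intro sum_mono) (auto simp: abs_le_iff)
  then have "emp_risk n S g' - emp_risk n S g \<le> r"
    using n by (simp add: emp_risk_def sum_subtractf diff_divide_distrib[symmetric] divide_le_eq mult.commute)
  ultimately show ?thesis
    unfolding dev_def by linarith
qed

text \<open>With this mesh a rounded point is within \<open>2\<^bsup>-j\<^esup>/24\<close> of \<open>w\<close>, hence consecutive chain
  points are within \<open>2\<^bsup>-j\<^esup>/8\<close> of each other.\<close>

definition resolution :: "nat \<Rightarrow> nat" where
  "resolution j = 24 * (k + 1) * 2 ^ j"

definition net :: "nat \<Rightarrow> 'p ltree \<Rightarrow> real list set" where
  "net j f = weight_net (resolution j) (leaves f)"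

definition chain_point :: "nat \<Rightarrow> real list \<Rightarrow> real list" where
  "chain_point j w = round_weights (resolution j) w"

lemma resolution_pos: "resolution j > 0"
  by (simp add: resolution_def)

lemma leaves_le: "f \<in> F \<Longrightarrow> leaves f \<le> k + 1"
  using nodes_eq_leaves[of f] by (simp add: trees_def)

lemma netD:
  assumes "v \<in> net j f"
  shows "length v = leaves f" "l1_norm v \<le> 1"
  using weight_netD[OF resolution_pos] assms by (simp_all add: net_def)

lemma finite_net: "finite (net j f)"
  by (simp add: net_def finite_weight_net)

lemma card_net_le: "f \<in> F \<Longrightarrow> real (card (net j f)) \<le> exp (real (k + 1) * (6 + real j))"
  using card_weight_net_dyadic_le[of "leaves f" "k + 1" j] leaves_le[of f]
  by (simp add: net_def resolution_def mult.assoc)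

lemma chain_point_in_net: "length w = leaves f \<Longrightarrow> l1_norm w \<le> 1 \<Longrightarrow> chain_point j w \<in> net j f"
  using round_weights_in_weight_net[OF resolution_pos, of w j] by (simp add: net_def chain_point_def)

lemma l1_dist_chain_point_le:
  assumes "f \<in> F" "length w = leaves f"
  shows "l1_dist w (chain_point j w) \<le> 1 / (24 * 2 ^ j)"
proof -
  have "real (resolution j) = real (k + 1) * (24 * 2 ^ j)"
    by (simp add: resolution_def)
  then have resolution: "real (k + 1) / real (resolution j) = 1 / (24 * 2 ^ j)"
    by simp
  have "l1_dist w (chain_point j w) \<le> real (length w) / real (resolution j)"
    unfolding chain_point_def by (rule l1_dist_round_weights_le[OF resolution_pos])
  also have "\<dots> \<le> real (k + 1) / real (resolution j)"
    using assms leaves_le[OF assms(1)] by (intro divide_right_mono) auto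
  finally show ?thesis
    unfolding resolution .
qed

lemma l1_dist_chain_step_le:
  assumes "f \<in> F" "length w = leaves f" "j \<ge> 1"
  shows "l1_dist (chain_point j w) (chain_point (j - 1) w) \<le> 1 / (8 * 2 ^ j)"
proof -
  have "l1_dist (chain_point j w) (chain_point (j - 1) w)
      \<le> l1_dist (chain_point j w) w + l1_dist w (chain_point (j - 1) w)"
    by (rule l1_dist_triangle) (simp_all add: chain_point_def)
  also have "\<dots> \<le> 1 / (24 * 2 ^ j) + 1 / (24 * 2 ^ (j - 1))"
    using l1_dist_chain_point_le[OF assms(1,2)] l1_dist_commute by (metis add_mono)
  also have "\<dots> = 1 / (8 * 2 ^ j)"
    using assms(3) by (cases j) (simp_all add: field_simps)
  finally show ?thesis .
qed


definition links0 :: "('p ltree \<times> real list) set" where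
  "links0 = Sigma F (net 0)"

definition links :: "nat \<Rightarrow> ('p ltree \<times> real list \<times> real list) set" where
  "links j = {(f, v, u). f \<in> F \<and> v \<in> net j f \<and> u \<in> net (j - 1) f \<and> l1_dist v u \<le> 1 / (8 * 2 ^ j)}"

definition link_loss :: "'p ltree \<times> real list \<times> real list \<Rightarrow> (real ^ 'p) \<times> real \<Rightarrow> real" where
  "link_loss = (\<lambda>(f, v, u) z. tree_loss d \<phi> f v z - tree_loss d \<phi> f u z)"

definition bad0 :: "real \<Rightarrow> (nat \<Rightarrow> (real ^ 'p) \<times> real) set" where
  "bad0 B = (\<Union>i\<in>links0. emp_risk_lower_tail n D (case_prod (tree_loss d \<phi>) i) (sqrt (B / (2 * real n))))"

definition bad :: "nat \<Rightarrow> real \<Rightarrow> (nat \<Rightarrow> (real ^ 'p) \<times> real) set" where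
  "bad j B = (\<Union>i\<in>links j. emp_risk_lower_tail n D (link_loss i) (1 / (4 * 2 ^ j) * sqrt (B / (2 * real n))))"

lemma finite_links0: "finite links0"
  unfolding links0_def by (intro finite_SigmaI finite_trees finite_net)

lemma card_links0_le: "real (card links0) \<le> num_trees_bound CARD('p) q k * exp (real (k + 1) * 6)"
proof -
  have "real (card links0) = (\<Sum>f\<in>F. real (card (net 0 f)))"
    unfolding links0_def using card_SigmaI[OF finite_trees[of q k], of "net 0"] finite_net
    by (simp flip: of_nat_sum)
  also have "\<dots> \<le> (\<Sum>f\<in>F. exp (real (k + 1) * 6))"
    using card_net_le[of _ 0] by (intro sum_mono) simp
  also have "\<dots> \<le> num_trees_bound CARD('p) q k * exp (real (k + 1) * 6)"
    using card_trees_le[OF q, of k] by (simp add: mult_right_mono)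
  finally show ?thesis .
qed

lemma links_subset: "links j \<subseteq> Sigma F (\<lambda>f. net j f \<times> net (j - 1) f)"
  unfolding links_def by auto

lemma finite_links: "finite (links j)"
  by (rule finite_subset[OF links_subset]) (intro finite_SigmaI finite_cartesian_product finite_trees finite_net)

lemma card_links_le:
  assumes "j \<ge> 1"
  shows "real (card (links j))
    \<le> num_trees_bound CARD('p) q k * exp (real (k + 1) * (6 + real j)) * exp (real (k + 1) * (5 + real j))"
proof -
  have "card (links j) \<le> card (Sigma F (\<lambda>f. net j f \<times> net (j - 1) f))"
    by (rule card_mono[OF _ links_subset]) (intro finite_SigmaI finite_cartesian_product finite_trees finite_net)
  also have "\<dots> = (\<Sum>f\<in>F. card (net j f) * card (net (j - 1) f))"
    using card_SigmaI[OF finite_trees[of q k], of "\<lambda>f. net j f \<times> net (j - 1) f"] finite_net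
    by (simp add: card_cartesian_product)
  finally have "real (card (links j)) \<le> (\<Sum>f\<in>F. real (card (net j f)) * real (card (net (j - 1) f)))"
    by (simp flip: of_nat_sum of_nat_mult)
  also have "\<dots> \<le> (\<Sum>f\<in>F. exp (real (k + 1) * (6 + real j)) * exp (real (k + 1) * (5 + real j)))"
    using card_net_le[of _ j] card_net_le[of _ "j - 1"] assms
    by (intro sum_mono mult_mono) (auto simp: of_nat_diff)
  also have "\<dots> \<le> num_trees_bound CARD('p) q k * exp (real (k + 1) * (6 + real j)) * exp (real (k + 1) * (5 + real j))"
    using card_trees_le[OF q, of k] by (simp add: mult_right_mono mult.assoc)
  finally show ?thesis .
qed

lemma bad0_sets_measure:
  assumes "B \<ge> 0"
  shows "bad0 B \<in> sets P" "measure P (bad0 B) \<le> num_trees_bound CARD('p) q k * exp (real (k + 1) * 6) * exp (- B)"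
proof -
  have H: "case_prod (tree_loss d \<phi>) i \<in> H" if i: "i \<in> links0" for i
  proof -
    obtain f v where "i = (f, v)" "f \<in> F" "v \<in> net 0 f"
      using i by (auto simp: links0_def)
    then show ?thesis
      using tree_loss_in_H netD by simp
  qed
  note union = hoeffding_emp_risk_union[OF D n finite_links0, where g = "case_prod (tree_loss d \<phi>)"
      and a = "\<lambda>_. 0" and c = 1, OF H_measurable[OF H] _ zero_less_one assms]
  show "bad0 B \<in> sets P"
    using union(1) H_AE_range[OF H] by (simp add: bad0_def)
  have "measure P (bad0 B) \<le> card links0 * exp (- B)"
    using union(2) H_AE_range[OF H] by (simp add: bad0_def)
  also have "\<dots> \<le> num_trees_bound CARD('p) q k * exp (real (k + 1) * 6) * exp (- B)"
    using card_links0_le by (simp add: mult_right_mono)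
  finally show "measure P (bad0 B) \<le> num_trees_bound CARD('p) q k * exp (real (k + 1) * 6) * exp (- B)" .
qed

lemma link_loss_AE_range:
  assumes "i \<in> links j"
  shows "AE z in D. link_loss i z \<in> {- 1 / (8 * 2 ^ j) .. - 1 / (8 * 2 ^ j) + 1 / (4 * 2 ^ j)}"
  using D_Y
proof eventually_elim
  case (elim z)
  obtain f v u where i: "i = (f, v, u)" "f \<in> F" "v \<in> net j f" "u \<in> net (j - 1) f"
    "l1_dist v u \<le> 1 / (8 * 2 ^ j)"
    using assms by (auto simp: links_def)
  have "\<bar>link_loss i z\<bar> \<le> l1_dist v u"
    using abs_tree_loss_diff_le[OF i(2) netD(1)[OF i(3)] netD(1)[OF i(4)] netD(2)[OF i(3)] netD(2)[OF i(4)] elim]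
    by (simp add: i(1) link_loss_def)
  then have "\<bar>link_loss i z\<bar> \<le> 1 / (8 * 2 ^ j)"
    using i(5) by linarith
  moreover have "- 1 / (8 * 2 ^ j) + 1 / (4 * 2 ^ j) = 1 / (8 * (2::real) ^ j)"
    by (simp add: field_simps)
  ultimately show ?case
    by (auto simp: abs_le_iff)
qed

lemma link_loss_measurable:
  assumes "i \<in> links j"
  shows "link_loss i \<in> borel_measurable D"
proof -
  obtain f v u where i: "i = (f, v, u)" "f \<in> F" "v \<in> net j f" "u \<in> net (j - 1) f"
    using assms by (auto simp: links_def)
  have "tree_loss d \<phi> f v \<in> H" "tree_loss d \<phi> f u \<in> H"
    using i(2) tree_loss_in_H netD i(3,4) by simp_all
  then show ?thesis
    using H_measurable by (simp add: i(1) link_loss_def)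
qed

lemma bad_sets_measure:
  assumes "j \<ge> 1" "B \<ge> 0"
  shows "bad j B \<in> sets P"
    "measure P (bad j B) \<le> num_trees_bound CARD('p) q k * exp (real (k + 1) * (6 + real j))
       * exp (real (k + 1) * (5 + real j)) * exp (- B)"
proof -
  note union = hoeffding_emp_risk_union[OF D n finite_links, where g = link_loss
      and a = "\<lambda>_. - 1 / (8 * 2 ^ j)" and c = "1 / (4 * 2 ^ j)",
      OF link_loss_measurable link_loss_AE_range _ assms(2)]
  show "bad j B \<in> sets P"
    using union(1) by (simp add: bad_def)
  have "measure P (bad j B) \<le> card (links j) * exp (- B)"
    using union(2) by (simp add: bad_def)
  also have "\<dots> \<le> num_trees_bound CARD('p) q k * exp (real (k + 1) * (6 + real j))
       * exp (real (k + 1) * (5 + real j)) * exp (- B)"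
    using card_links_le[OF assms(1)] by (simp add: mult_right_mono)
  finally show "measure P (bad j B) \<le> num_trees_bound CARD('p) q k * exp (real (k + 1) * (6 + real j))
       * exp (real (k + 1) * (5 + real j)) * exp (- B)" .
qed


lemma dev_tree_loss_le_chaining_bound:
  assumes S: "S \<in> space P" "\<And>i. i < n \<Longrightarrow> snd (S i) \<in> Y"
    and f: "f \<in> F" "length w = leaves f" "l1_norm w \<le> 1"
    and good0: "S \<notin> bad0 B0" and good: "\<And>j. j \<in> {1..J} \<Longrightarrow> S \<notin> bad j (B j)"
  shows "dev S (tree_loss d \<phi> f w) \<le> chaining_bound n B0 B J"
proof -
  define v where "v j = chain_point j w" for j
  have v: "v j \<in> net j f" for j
    using chain_point_in_net f(2,3) by (simp add: v_def)
  define dv where "dv j = dev S (tree_loss d \<phi> f (v j))" for j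
  have integrable: "integrable D (tree_loss d \<phi> f (v j))" for j
    using H_integrable tree_loss_in_H[OF f(1) netD[OF v]] .
  have level0: "dv 0 < sqrt (B0 / (2 * real n))"
  proof -
    have "(f, v 0) \<in> links0"
      using f(1) v by (simp add: links0_def)
    then have "S \<notin> emp_risk_lower_tail n D (tree_loss d \<phi> f (v 0)) (sqrt (B0 / (2 * real n)))"
      using good0 by (auto simp: bad0_def)
    then show ?thesis
      using dev_less_if_notin_lower_tail[OF S(1)] by (simp add: dv_def)
  qed
  have level: "dv j - dv (j - 1) < 1 / (4 * 2 ^ j) * sqrt (B j / (2 * real n))" if j: "j \<in> {1..J}" for j
  proof -
    have "(f, v j, v (j - 1)) \<in> links j"
      using f v l1_dist_chain_step_le[OF f(1,2)] j by (simp add: links_def v_def)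
    then have "S \<notin> emp_risk_lower_tail n D (link_loss (f, v j, v (j - 1))) (1 / (4 * 2 ^ j) * sqrt (B j / (2 * real n)))"
      using good[OF j] by (auto simp: bad_def)
    then have "dev S (link_loss (f, v j, v (j - 1))) < 1 / (4 * 2 ^ j) * sqrt (B j / (2 * real n))"
      by (rule dev_less_if_notin_lower_tail[OF S(1)])
    then show ?thesis
      using dev_diff[OF integrable integrable] by (simp add: link_loss_def dv_def)
  qed
  have "dv J = dv 0 + (\<Sum>j\<in>{1..J}. dv j - dv (j - 1))"
    by (induction J) simp_all
  also have "\<dots> \<le> sqrt (B0 / (2 * real n)) + (\<Sum>j\<in>{1..J}. 1 / (4 * 2 ^ j) * sqrt (B j / (2 * real n)))"
    using level0 level by (intro add_mono sum_mono) (auto intro: less_imp_le)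
  finally have "dv J \<le> sqrt (B0 / (2 * real n)) + (\<Sum>j\<in>{1..J}. 1 / (4 * 2 ^ j) * sqrt (B j / (2 * real n)))" .
  moreover have "dev S (tree_loss d \<phi> f w) \<le> dv J + 2 * (1 / (24 * 2 ^ J))"
    unfolding dv_def
  proof (rule dev_le_if_close[OF H_integrable[OF tree_loss_in_H[OF f]] integrable S(2)])
    fix z :: "(real ^ 'p) \<times> real"
    assume "snd z \<in> Y"
    then have "\<bar>tree_loss d \<phi> f w z - tree_loss d \<phi> f (v J) z\<bar> \<le> l1_dist w (v J)"
      using abs_tree_loss_diff_le[OF f(1,2) netD(1)[OF v] f(3) netD(2)[OF v]] by simp
    also have "\<dots> \<le> 1 / (24 * 2 ^ J)"
      using l1_dist_chain_point_le[OF f(1,2)] by (simp add: v_def)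
    finally show "\<bar>tree_loss d \<phi> f w z - tree_loss d \<phi> f (v J) z\<bar> \<le> 1 / (24 * 2 ^ J)" .
  qed
  ultimately show ?thesis
    by (simp add: chaining_bound_def)
qed

lemma samples_in_Y:
  obtains G where "G \<in> sets P" "measure P G = 1" "\<And>S i. S \<in> G \<Longrightarrow> i < n \<Longrightarrow> snd (S i) \<in> Y"
proof -
  interpret P: prob_space P by (rule prob_space_P)
  obtain N where "{z \<in> space D. \<not> snd z \<in> Y} \<subseteq> N" "emeasure D N = 0" and N_sets [measurable]: "N \<in> sets D"
    using D_Y by (rule AE_E)
  then have N: "{z \<in> space D. snd z \<notin> Y} \<subseteq> N" "N \<in> null_sets D"
    by (simp_all add: null_sets_def)
  define G where "G = {S \<in> space P. \<forall>i\<in>{..<n}. S i \<in> -N}"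
  have G: "G \<in> sets P"
    unfolding G_def by measurable
  moreover have "AE S in P. \<forall>i\<in>{..<n}. S i \<in> -N"
  proof (rule eventually_ball_finite)
    show "\<forall>i\<in>{..<n}. AE S in P. S i \<in> -N"
    proof
      fix i assume "i \<in> {..<n}"
      then show "AE S in P. S i \<in> -N"
        using AE_PiM_component[of "{..<n}" "\<lambda>_. D" i "\<lambda>z. z \<in> -N"] D AE_not_in[OF N(2)] by simp
    qed
  qed simp
  then have "measure P G = 1"
    using P.prob_Collect_eq_1[of "\<lambda>S. \<forall>i\<in>{..<n}. S i \<in> -N"] G by (simp add: G_def)
  moreover have "snd (S i) \<in> Y" if "S \<in> G" "i < n" for S i
    using that N(1) by (auto simp: G_def space_PiM)
  ultimately show ?thesis
    using that by blast
qed


lemma uniform_deviation: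
  assumes \<delta>: "\<delta> \<in> {0<..<1}"
  shows "\<exists>A\<in>sets P. measure P A \<ge> 1 - \<delta> / 2 \<and>
    (\<forall>S\<in>A. \<forall>h\<in>H. dev S h \<le> chaining_bound n
        (chaining_conf0 (ln (num_trees_bound CARD('p) q k)) (k + 1) (ln (2 / \<delta>)))
        (chaining_conf (ln (num_trees_bound CARD('p) q k)) (k + 1) (ln (2 / \<delta>))) J)"
proof -
  interpret P: prob_space P by (rule prob_space_P)
  define K \<Lambda> where "K = ln (num_trees_bound CARD('p) q k)" and "\<Lambda> = ln (2 / \<delta>)"
  define B0 B where "B0 = chaining_conf0 K (k + 1) \<Lambda>" and "B = chaining_conf K (k + 1) \<Lambda>"
  have "num_trees_bound CARD('p) q k \<ge> 1"
    using num_trees_bound_ge_1 q by (simp add: Suc_leI)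
  then have K: "exp K = num_trees_bound CARD('p) q k" "K \<ge> 0"
    by (simp_all add: K_def)
  have \<Lambda>: "exp (- \<Lambda>) = \<delta> / 2" "\<Lambda> \<ge> 0"
    using \<delta> by (simp_all add: \<Lambda>_def exp_minus)
  have B: "B0 \<ge> 0" "B j \<ge> 0" for j
    using chaining_conf_nonneg[OF K(2) \<Lambda>(2)] by (simp_all add: B0_def B_def)
  have bad0: "bad0 B0 \<in> sets P" "measure P (bad0 B0) \<le> \<delta> / 4"
  proof -
    have "exp K * exp (real (k + 1) * 6) * exp (- B0) = exp (- \<Lambda> + - ln 2)"
      unfolding exp_add[symmetric] by (simp add: B0_def chaining_conf0_def)
    also have "\<dots> = \<delta> / 4"
      by (simp only: exp_add \<Lambda>(1)) (simp add: exp_minus)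
    finally show "measure P (bad0 B0) \<le> \<delta> / 4"
      using bad0_sets_measure(2)[OF B(1)] K(1) by simp
  qed (rule bad0_sets_measure(1)[OF B(1)])
  have bad: "measure P (bad j (B j)) \<le> \<delta> / 2 * (1 / 2 ^ (j + 1))" if "j \<ge> 1" for j
  proof -
    have "exp K * exp (real (k + 1) * (6 + real j)) * exp (real (k + 1) * (5 + real j)) * exp (- B j)
        = exp (- \<Lambda>) * exp (- (real (j + 1) * ln 2))"
      unfolding exp_add[symmetric] by (simp add: B_def chaining_conf_def algebra_simps)
    also have "\<dots> = \<delta> / 2 * (1 / 2 ^ (j + 1))"
    proof -
      have "exp (real (j + 1) * ln 2) = 2 ^ (j + 1)"
        by (subst exp_of_nat_mult) simp
      then have "exp (- (real (j + 1) * ln 2)) = 1 / 2 ^ (j + 1)"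
        by (simp only: exp_minus inverse_eq_divide)
      then show ?thesis
        by (simp only: \<Lambda>(1))
    qed
    finally show ?thesis
      using bad_sets_measure(2)[OF that B(2)[of j]] K(1) by simp
  qed
  define U where "U = (\<Union>j\<in>{1..J}. bad j (B j))"
  have U: "U \<in> sets P" "measure P U \<le> \<delta> / 4"
  proof -
    have sets: "bad j (B j) \<in> sets P" if "j \<in> {1..J}" for j
      using bad_sets_measure(1)[OF _ B(2)] that by simp
    then show "U \<in> sets P"
      unfolding U_def by blast
    have "measure P U \<le> (\<Sum>j\<in>{1..J}. measure P (bad j (B j)))"
      unfolding U_def by (rule P.finite_measure_subadditive_finite) (use sets in auto)
    also have "\<dots> \<le> (\<Sum>j\<in>{1..J}. \<delta> / 2 * (1 / 2 ^ (j + 1)))"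
      using bad by (intro sum_mono) simp
    also have "\<dots> = \<delta> / 2 * (\<Sum>j\<in>{1..J}. 1 / 2 ^ (j + 1))"
      by (simp only: sum_distrib_left)
    also have "\<dots> \<le> \<delta> / 2 * (1 / 2)"
      using sum_inverse_power2_le[of J] \<delta> by (intro mult_left_mono) auto
    finally show "measure P U \<le> \<delta> / 4"
      by simp
  qed
  obtain G where G: "G \<in> sets P" "measure P G = 1" "\<And>S i. S \<in> G \<Longrightarrow> i < n \<Longrightarrow> snd (S i) \<in> Y"
    by (rule samples_in_Y) blast
  define A where "A = G - (bad0 B0 \<union> U)"
  have A: "A \<in> sets P"
    unfolding A_def using G(1) bad0(1) U(1) by blast
  have "measure P G \<le> measure P A + measure P (bad0 B0 \<union> U)"
    unfolding A_def using G(1) bad0(1) U(1)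
    by (intro order.trans[OF P.finite_measure_mono measure_Un_le]) auto
  also have "measure P (bad0 B0 \<union> U) \<le> \<delta> / 2"
    using measure_Un_le[OF bad0(1) U(1)] bad0(2) U(2) by simp
  finally have "measure P A \<ge> 1 - \<delta> / 2"
    using G(2) by simp
  moreover have "dev S h \<le> chaining_bound n B0 B J" if "S \<in> A" "h \<in> H" for S h
  proof -
    obtain f w where f: "f \<in> F" "length w = leaves f" "l1_norm w \<le> 1" "h = tree_loss d \<phi> f w"
      using \<open>h \<in> H\<close> unfolding mem_Hm_iff by blast
    have "S \<in> space P"
      using \<open>S \<in> A\<close> G(1) sets.sets_into_space by (auto simp: A_def)
    then show ?thesis
      unfolding f(4) using \<open>S \<in> A\<close> G(3)
      by (intro dev_tree_loss_le_chaining_bound[OF _ _ f(1-3)]) (auto simp: A_def U_def)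
  qed
  ultimately show ?thesis
    using A unfolding B0_def B_def K_def \<Lambda>_def by blast
qed


lemma excess_risk_le:
  assumes \<delta>: "\<delta> \<in> {0<..<1}"
    and hhat: "\<And>S. S \<in> space P \<Longrightarrow> hhat S \<in> H \<and> (\<forall>h\<in>H. emp_risk n S (hhat S) \<le> emp_risk n S h)"
    and hbar: "hbar \<in> H"
  shows "\<exists>A\<in>sets P. measure P A \<ge> 1 - \<delta> \<and>
    (\<forall>S\<in>A. integral\<^sup>L D (hhat S) - integral\<^sup>L D hbar \<le> chaining_bound n
        (chaining_conf0 (ln (num_trees_bound CARD('p) q k)) (k + 1) (ln (2 / \<delta>)))
        (chaining_conf (ln (num_trees_bound CARD('p) q k)) (k + 1) (ln (2 / \<delta>))) J
      + sqrt (ln (2 / \<delta>) / (2 * real n)))"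
proof -
  interpret P: prob_space P by (rule prob_space_P)
  let ?bound = "chaining_bound n
        (chaining_conf0 (ln (num_trees_bound CARD('p) q k)) (k + 1) (ln (2 / \<delta>)))
        (chaining_conf (ln (num_trees_bound CARD('p) q k)) (k + 1) (ln (2 / \<delta>))) J"
  let ?s = "sqrt (ln (2 / \<delta>) / (2 * real n))"
  obtain A where A: "A \<in> sets P" "measure P A \<ge> 1 - \<delta> / 2" "\<And>S h. S \<in> A \<Longrightarrow> h \<in> H \<Longrightarrow> dev S h \<le> ?bound"
    using uniform_deviation[OF \<delta>, of J] by blast
  define T where "T = emp_risk_lower_tail n D (\<lambda>z. - hbar z) (1 * ?s)"
  have neg_hbar: "(\<lambda>z. - hbar z) \<in> borel_measurable D" "AE z in D. - hbar z \<in> {-1..-1 + 1}"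
    using H_measurable[OF hbar] H_AE_range[OF hbar] by (auto elim: eventually_mono)
  have "ln (2 / \<delta>) \<ge> 0"
    using \<delta> by simp
  note tail = hoeffding_emp_risk_union[OF D n finite.insertI[OF finite.emptyI], where g = "\<lambda>_. \<lambda>z. - hbar z"
      and a = "\<lambda>_. -1" and c = 1, OF neg_hbar zero_less_one this]
  have T: "T \<in> sets P" "measure P T \<le> \<delta> / 2"
    using tail \<delta> by (simp_all add: T_def exp_minus)
  have "measure P A \<le> measure P (A - T) + measure P T"
    using A(1) T(1) by (intro order.trans[OF P.finite_measure_mono measure_Un_le]) auto
  then have "measure P (A - T) \<ge> 1 - \<delta>"
    using A(2) T(2) by simp
  moreover have "integral\<^sup>L D (hhat S) - integral\<^sup>L D hbar \<le> ?bound + ?s" if S: "S \<in> A - T" for S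
  proof -
    have space: "S \<in> space P"
      using S A(1) sets.sets_into_space by auto
    have "dev S (\<lambda>z. - hbar z) < ?s"
      using dev_less_if_notin_lower_tail[OF space] S by (simp add: T_def)
    then have "emp_risk n S hbar - integral\<^sup>L D hbar < ?s"
      by (simp add: dev_def emp_risk_def sum_negf)
    moreover have "emp_risk n S (hhat S) \<le> emp_risk n S hbar" "dev S (hhat S) \<le> ?bound"
      using hhat[OF space] hbar A(3) S by auto
    ultimately show ?thesis
      by (simp add: dev_def)
  qed
  ultimately show ?thesis
    using A(1) T(1) by blast
qed

end

theorem corollary1:
  fixes q k n :: nat
    and \<phi> :: "nat \<Rightarrow> real \<Rightarrow> real"
    and Y :: "real set"
    and d :: "real \<Rightarrow> real \<Rightarrow> real"
    and D :: "((real ^ 'p) \<times> real) measure"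
    and hhat :: "(nat \<Rightarrow> (real ^ 'p) \<times> real) \<Rightarrow> ((real ^ 'p) \<times> real \<Rightarrow> real)"
    and hbar :: "(real ^ 'p) \<times> real \<Rightarrow> real"
    and \<delta> \<epsilon> :: real
  assumes q: "q \<ge> 1" and k: "k \<ge> 1"
    and phi_range: "\<And>i t. i \<in> {1..q} \<Longrightarrow> \<phi> i t \<in> {-1..1}"
    and d_range: "\<And>y t. y \<in> Y \<Longrightarrow> d y t \<in> {0..1}"
    and d_lip: "\<And>y s t. y \<in> Y \<Longrightarrow> \<bar>d y s - d y t\<bar> \<le> \<bar>s - t\<bar>"
    and D_prob: "prob_space D"
    and D_sets: "sets D = sets borel"
    and D_Y: "AE z in D. snd z \<in> Y"
    and H_meas: "\<And>h. h \<in> Hm d \<phi> q (2*k+1) \<Longrightarrow> h \<in> borel_measurable D"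
    and hhat_min: "\<And>S. S \<in> space (PiM {..<n} (\<lambda>_. D)) \<Longrightarrow>
        hhat S \<in> Hm d \<phi> q (2*k+1) \<and>
        (\<forall>h \<in> Hm d \<phi> q (2*k+1). emp_risk n S (hhat S) \<le> emp_risk n S h)"
    and hbar_min: "hbar \<in> Hm d \<phi> q (2*k+1)"
        "\<And>h. h \<in> Hm d \<phi> q (2*k+1) \<Longrightarrow> integral\<^sup>L D hbar \<le> integral\<^sup>L D h"
    and delta: "\<delta> \<in> {0<..<1}" and eps: "\<epsilon> \<in> {0<..<1}"
    and n_bound: "real n \<ge> (3 * (real k + 1) * (ln (real (CARD('p) * q)) + 8)
        + 3 * ln (8 * real k * fact k) + 6 * ln (2 / \<delta>)) / (2 * \<epsilon>^2)"
  shows "\<exists>A \<in> sets (PiM {..<n} (\<lambda>_. D)).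
           measure (PiM {..<n} (\<lambda>_. D)) A \<ge> 1 - \<delta> \<and>
           (\<forall>S \<in> A. integral\<^sup>L D (hhat S) - integral\<^sup>L D hbar \<le> \<epsilon>)"
proof -
  have p: "CARD('p) \<ge> 1" and \<epsilon>: "\<epsilon> > 0"
    using eps by (simp_all add: Suc_leI)
  obtain J where J: "chaining_bound n
      (chaining_conf0 (ln (num_trees_bound CARD('p) q k)) (k + 1) (ln (2 / \<delta>)))
      (chaining_conf (ln (num_trees_bound CARD('p) q k)) (k + 1) (ln (2 / \<delta>))) J
      + sqrt (ln (2 / \<delta>) / (2 * real n)) \<le> \<epsilon>"
    using sample_size_suffices(2)[OF p q k delta \<epsilon> n_bound] by blast
  have phi_bound: "\<bar>\<phi> i t\<bar> \<le> 1" if "i \<in> {1..q}" for i t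
    using phi_range[OF that, of t] by (simp add: abs_le_iff)
  interpret tree_learning q k n \<phi> Y d D
    by (rule tree_learning.intro[OF q sample_size_suffices(1)[OF p q k delta \<epsilon> n_bound] phi_bound
          d_range d_lip D_prob D_Y H_meas])
  obtain A where "A \<in> sets (PiM {..<n} (\<lambda>_. D))" "measure (PiM {..<n} (\<lambda>_. D)) A \<ge> 1 - \<delta>"
    "\<And>S. S \<in> A \<Longrightarrow> integral\<^sup>L D (hhat S) - integral\<^sup>L D hbar \<le> \<epsilon>"
    using excess_risk_le[OF delta hhat_min hbar_min(1), of J] J by (meson order.trans)
  then show ?thesis
    by blast
qed

end
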